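(* Let $1\le k\le n$, let $r$ be a real symmetric $n\times n$ matrix with eigenvalues $r_1,\dots,r_n$, let $x\in\mathbb R^n$ and $r_{00}\in\mathbb R$. Then the degree-$(k+1)$ polynomial $$p_{k+1}(t)=(r_{00}+t)\,\sigma_k(r+tI)-x\,T_{k-1}(r+tI)\,x^T$$ has only real roots. Moreover, if $\alpha_1\le\cdots\le\alpha_{k+1}$ are its roots and $\beta_1\le\cdots\le\beta_k$ are the (real) roots of $\sigma_k(r+tI)$, then they interlace: $\alpha_1\le\beta_1\le\alpha_2\le\beta_2\le\cdots\le\beta_k\le\alpha_{k+1}$. Furthermore $\alpha_i\in[\min_{1\le j\le n}(-r_j),\ \max_{1\le j\le n}(-r_j)]$ for $2\le i\le k-1$.
   Context: For a real symmetric $n\times n$ matrix $s$, $\sigma_j(s)$ denotes the $j$-th elementary symmetric function of its eigenvalues ($\sigma_0=1$) and $T_j(s)=\sum_{i=0}^{j}(-1)^i\sigma_{j-i}(s)s^i$ is the Newton transformation. *)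

theory Defs
  imports "Jordan_Normal_Form.Jordan_Normal_Form"
begin

definition esym :: "nat \<Rightarrow> real list \<Rightarrow> real" where
  "esym j xs = (\<Sum>S | S \<subseteq> {..<length xs} \<and> card S = j. \<Prod>i\<in>S. xs ! i)"

(* the eigenvalues of a (real symmetric, hence real-diagonalisable) square matrix, listed
   with algebraic multiplicity: a list es with char_poly s = prod (X - e) *)
definition eigvals :: "real mat \<Rightarrow> real list" where
  "eigvals s = (SOME es. char_poly s = (\<Prod>e\<leftarrow>es. [:- e, 1:]))"

definition sigma :: "nat \<Rightarrow> real mat \<Rightarrow> real" where
  "sigma j s = esym j (eigvals s)"

definition newton_T :: "nat \<Rightarrow> real mat \<Rightarrow> real mat" where
  "newton_T j s = foldr (\<lambda>i acc. ((-1) ^ i * sigma (j - i) s) \<cdot>\<^sub>m (s ^\<^sub>m i) + acc)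
                     [0..<Suc j] (0\<^sub>m (dim_row s) (dim_row s))"

definition p_poly :: "nat \<Rightarrow> real mat \<Rightarrow> real \<Rightarrow> real vec \<Rightarrow> real \<Rightarrow> real" where
  "p_poly k r r00 x t =
     (let s = r + t \<cdot>\<^sub>m 1\<^sub>m (dim_row r)
      in (r00 + t) * sigma k s - x \<bullet> (newton_T (k - 1) s *\<^sub>v x))"

end

(*
  Diagonalise r = W diag(r_1, ..., r_n) W^T orthogonally, let E_l(t) = sigma_l(r_1 + t, ..., r_n + t)
  and let E_l^(j) be the same with r_j omitted. Then sigma_k(r + tI) = E_k, and since the j-th
  eigenvalue of T_(k-1)(r + tI) telescopes to E_(k-1)^(j), x T_(k-1)(r + tI) x^T is the sum of the
  w_j E_(k-1)^(j) with weights w_j = (W^T x)_j^2 >= 0. Thus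
    p_(k+1) = (t + r00) E_k - sum_j w_j E_(k-1)^(j).

  Say h lies in the cone of g if at each root of g it vanishes to one order less than g, with a
  cofactor of sign opposite to that of g just right of the root. These h form a convex cone, and a
  member of degree deg g + 1 with positive leading coefficient alternates in sign at the roots of a
  real-rooted g, hence is itself real-rooted and interlaces g. The cone of E_k contains
  (t + r00) E_k and every -E_(k-1)^(j), because E_k interlaces E_(k-1)^(j): both summands of
  E_k = E_k^(j) + (t + r_j) E_(k-1)^(j) lie in the cone of E_(k-1)^(j). This yields the real roots of
  p_(k+1) and their interlacing with those of E_k.

  Finally, E_l is a constant multiple of the derivative of E_(l+1), so by Rolle's theorem the roots
  of every E_l lie between the extreme roots of E_n = prod_j (t + r_j); by interlacing, so do the
  inner roots of p_(k+1).
*)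

theory Submission
  imports Defs "Jordan_Normal_Form.Schur_Decomposition"
begin

section \<open>Real-rooted polynomials and interlacing\<close>

definition real_rooted :: "real poly \<Rightarrow> bool" where
  "real_rooted p \<longleftrightarrow> p \<noteq> 0 \<and> size (proots p) = degree p"

definition count_roots_le :: "real poly \<Rightarrow> real \<Rightarrow> nat" where
  "count_roots_le p y = size (filter_mset (\<lambda>a. a \<le> y) (proots p))"

definition count_roots_less :: "real poly \<Rightarrow> real \<Rightarrow> nat" where
  "count_roots_less p y = size (filter_mset (\<lambda>a. a < y) (proots p))"

definition count_roots_greater :: "real poly \<Rightarrow> real \<Rightarrow> nat" where
  "count_roots_greater p y = size (filter_mset (\<lambda>a. y < a) (proots p))"

text \<open>Interlacing of roots counted with multiplicity, expressed through counting functions so that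
  common and multiple roots need no special treatment.\<close>

definition interlaces :: "real poly \<Rightarrow> real poly \<Rightarrow> bool" where
  "interlaces h g \<longleftrightarrow> real_rooted h \<and> real_rooted g \<and> degree h = Suc (degree g) \<and>
     (\<forall>y. count_roots_le g y \<le> count_roots_le h y \<and> count_roots_le h y \<le> Suc (count_roots_le g y) \<and>
          count_roots_less g y \<le> count_roots_less h y \<and> count_roots_less h y \<le> Suc (count_roots_less g y))"

declare mult_pCons_left[simp del]

lemma prod_mset_linear_nonzero: "(\<Prod>a\<in>#M. [:-a,1::real:]) \<noteq> 0"
  by (auto simp: prod_mset_zero_iff)

lemma proots_prod_mset_linear: "proots (\<Prod>a\<in>#M. [:-a,1::real:]) = M"
proof (induction M)
  case (add x M)
  have "proots (\<Prod>a\<in>#add_mset x M. [:-a,1::real:]) = proots ([:-x,1:] * (\<Prod>a\<in>#M. [:-a,1::real:]))" by simp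
  also have "\<dots> = {#x#} + M" using add prod_mset_linear_nonzero[of M] by (subst proots_mult) auto
  finally show ?case by simp
qed simp

lemma degree_prod_mset_linear: "degree (\<Prod>a\<in>#M. [:-a,1::real:]) = size M"
proof (induction M)
  case (add x M)
  have "degree (\<Prod>a\<in>#add_mset x M. [:-a,1::real:]) = degree ([:-x,1:] * (\<Prod>a\<in>#M. [:-a,1::real:]))" by simp
  also have "\<dots> = Suc (size M)" using add prod_mset_linear_nonzero[of M] by (subst degree_mult_eq) auto
  finally show ?case by simp
qed simp

lemma poly_prod_mset_linear: "poly (\<Prod>a\<in>#M. [:-a,1::real:]) y = (\<Prod>a\<in>#M. y - a)"
  by (induction M) (auto simp del: mult_pCons_left)

lemma real_rooted_prod_mset_linear: "real_rooted (\<Prod>a\<in>#M. [:-a,1::real:])"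
  using prod_mset_linear_nonzero[of M]
  by (simp only: real_rooted_def proots_prod_mset_linear degree_prod_mset_linear) simp

lemma real_rooted_factor:
  assumes "real_rooted p"
  shows "p = Polynomial.smult (lead_coeff p) (\<Prod>a\<in>#proots p. [:-a,1:])"
  using assms
proof (induction "degree p" arbitrary: p rule: less_induct)
  case (less p)
  have p0: "p \<noteq> 0" and sz: "size (proots p) = degree p" using less.prems by (auto simp: real_rooted_def)
  show ?case
  proof (cases "degree p = 0")
    case True
    then have "proots p = {#}" using sz by auto
    then show ?thesis using True by (auto elim: degree_eq_zeroE)
  next
    case False
    then obtain a where "a \<in># proots p" using sz by (metis size_empty multiset_nonemptyE)
    then have "poly p a = 0" using p0 by auto
    then obtain q where q: "p = [:-a,1:] * q" by (metis dvdE poly_eq_0_iff_dvd)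
    have q0: "q \<noteq> 0" using p0 q by auto
    have roots: "proots p = {#a#} + proots q" using q q0 by (simp add: proots_mult)
    have deg: "degree p = Suc (degree q)" using q q0 by (simp add: degree_mult_eq)
    have "real_rooted q" using sz roots deg q0 by (auto simp: real_rooted_def)
    then have IH: "q = Polynomial.smult (lead_coeff q) (\<Prod>a\<in>#proots q. [:-a,1:])" using less deg by auto
    have "lead_coeff p = lead_coeff q" using q by (simp add: lead_coeff_mult)
    then show ?thesis
      by (subst q, subst IH) (simp add: roots mult_smult_right)
  qed
qed

lemma poly_real_rooted:
  "real_rooted p \<Longrightarrow> poly p y = lead_coeff p * (\<Prod>a\<in>#proots p. y - a)"
  by (subst real_rooted_factor) (simp_all add: poly_prod_mset_linear)

lemma real_rooted_mult_factors:
  assumes "real_rooted (p * q)" shows "real_rooted p" "real_rooted q"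
proof -
  have nz: "p \<noteq> 0" "q \<noteq> 0" using assms by (auto simp: real_rooted_def)
  have "size (proots p) + size (proots q) = degree p + degree q"
    using assms nz by (simp add: real_rooted_def proots_mult degree_mult_eq)
  moreover have "size (proots p) \<le> degree p" "size (proots q) \<le> degree q" by (rule size_proots_le)+
  ultimately show "real_rooted p" "real_rooted q" using nz by (auto simp: real_rooted_def)
qed

lemma proots_linear_mult: "q \<noteq> 0 \<Longrightarrow> proots ([:-c,1:] * q) = add_mset c (proots (q::real poly))"
  by (subst proots_mult) auto

lemma degree_linear_mult: "q \<noteq> 0 \<Longrightarrow> degree ([:-c,1:] * q) = Suc (degree (q::real poly))"
  by (subst degree_mult_eq) auto

lemma sign_prod_mset_linear:
  assumes "y \<notin># M"
  shows "(-1::real) ^ size (filter_mset (\<lambda>a. y < a) M) * (\<Prod>a\<in>#M. y - a) > 0"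
  using assms
proof (induction M)
  case (add x M)
  then have IH: "(-1::real) ^ size (filter_mset (\<lambda>a. y < a) M) * (\<Prod>a\<in>#M. y - a) > 0" by auto
  have "x \<noteq> y" using add by auto
  then consider "y < x" | "x < y" by linarith
  then show ?case
  proof cases
    case 1
    have "(-1::real) ^ size (filter_mset (\<lambda>a. y < a) (add_mset x M)) * (\<Prod>a\<in>#add_mset x M. y - a)
       = (x - y) * ((-1::real) ^ size (filter_mset (\<lambda>a. y < a) M) * (\<Prod>a\<in>#M. y - a))"
      using 1 by (simp add: algebra_simps)
    also have "\<dots> > 0" using 1 by (intro mult_pos_pos[OF _ IH]) simp
    finally show ?thesis .
  next
    case 2
    have "(-1::real) ^ size (filter_mset (\<lambda>a. y < a) (add_mset x M)) * (\<Prod>a\<in>#add_mset x M. y - a)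
       = (y - x) * ((-1::real) ^ size (filter_mset (\<lambda>a. y < a) M) * (\<Prod>a\<in>#M. y - a))"
      using 2 by (simp add: algebra_simps)
    also have "\<dots> > 0" using 2 by (intro mult_pos_pos[OF _ IH]) simp
    finally show ?thesis .
  qed
qed simp

lemma size_filter_mset_partition:
  "size (filter_mset P M) + size (filter_mset (\<lambda>a. \<not> P a) M) = size M"
  by (metis multiset_partition size_union)

lemma count_roots_le_plus_greater: "count_roots_le p y + count_roots_greater p y = size (proots p)"
  unfolding count_roots_le_def count_roots_greater_def
  using size_filter_mset_partition[of "\<lambda>a. a \<le> y" "proots p"] by (simp add: not_le)

lemma count_roots_le_eq: "count_roots_le p y = count_roots_less p y + count (proots p) y"
proof -
  have "filter_mset (\<lambda>a. a \<le> y) (proots p) =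
      filter_mset (\<lambda>a. a < y) (proots p) + filter_mset (\<lambda>a. a = y) (proots p)"
    by (rule multiset_eqI) auto
  moreover have "size (filter_mset (\<lambda>a. a = y) M) = count M y" for M :: "real multiset"
    by (induction M) auto
  ultimately show ?thesis unfolding count_roots_le_def count_roots_less_def by simp
qed

lemma order_eq_count_roots:
  "p \<noteq> 0 \<Longrightarrow> Polynomial.order c p = count_roots_le p c - count_roots_less p c"
  using count_roots_le_eq[of p c] by simp

lemma subset_mset_size_eq:
  assumes "A \<subseteq># B" "size B \<le> size A" shows "A = B"
proof (rule ccontr)
  assume "A \<noteq> B"
  then have "size A < size B" using assms by (simp add: mset_subset_size subset_mset.le_neq_trans)
  then show False using assms by simp
qed

lemma sorted_wrt_less_nth_cancel:
  assumes "sorted_wrt (<) (zs::real list)" "i < length zs" "j < length zs" "zs ! i < zs ! j"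
  shows "i < j"
proof (rule ccontr)
  assume "\<not> i < j"
  then have "zs ! j \<le> zs ! i"
    using assms by (metis le_less sorted_wrt_nth_less order.refl not_less)
  then show False using assms by simp
qed

lemma size_filter_mset_map_upt:
  "size (filter_mset P (mset (map f [0..<m]))) = card {l. l < m \<and> P (f l)}"
proof -
  have "size (filter_mset P (mset (map f [0..<m]))) = length (filter P (map f [0..<m]))"
    by (metis mset_filter size_mset)
  also have "\<dots> = card {i. i < m \<and> P (map f [0..<m] ! i)}" by (simp add: length_filter_conv_card)
  also have "\<dots> = card {l. l < m \<and> P (f l)}" by (rule arg_cong[where f=card]) auto
  finally show ?thesis .
qed

lemma card_downward_closed_interlacing:
  fixes u v :: "nat \<Rightarrow> real" and R :: "real \<Rightarrow> bool"
  assumes uv: "\<And>l. l < m \<Longrightarrow> v l < u l \<and> u l < v (Suc l)"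
    and R: "\<And>a b. a < b \<Longrightarrow> R b \<Longrightarrow> R a"
  shows "card {l. l < m \<and> R (u l)} \<le> card {l. l < Suc m \<and> R (v l)}"
    and "card {l. l < Suc m \<and> R (v l)} \<le> Suc (card {l. l < m \<and> R (u l)})"
proof -
  have "{l. l < m \<and> R (u l)} \<subseteq> {l. l < Suc m \<and> R (v l)}"
    using uv R by auto
  then show "card {l. l < m \<and> R (u l)} \<le> card {l. l < Suc m \<and> R (v l)}"
    by (intro card_mono) auto
  have "{l. l < Suc m \<and> R (v l)} \<subseteq> insert 0 (Suc ` {l. l < m \<and> R (u l)})"
  proof
    fix l assume l: "l \<in> {l. l < Suc m \<and> R (v l)}"
    show "l \<in> insert 0 (Suc ` {l. l < m \<and> R (u l)})"
    proof (cases l)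
      case (Suc l')
      then have "l' < m" "R (u l')" using l uv[of l'] R by auto
      then show ?thesis using Suc by auto
    qed auto
  qed
  then have "card {l. l < Suc m \<and> R (v l)} \<le> card (insert 0 (Suc ` {l. l < m \<and> R (u l)}))"
    by (intro card_mono) auto
  also have "\<dots> \<le> Suc (card (Suc ` {l. l < m \<and> R (u l)}))" by (rule card_insert_le_m1) auto
  also have "\<dots> \<le> Suc (card {l. l < m \<and> R (u l)})"
    using card_image_le[of "{l. l < m \<and> R (u l)}" Suc] by auto
  finally show "card {l. l < Suc m \<and> R (v l)} \<le> Suc (card {l. l < m \<and> R (u l)})" .
qed

lemma interlacesI:
  assumes h: "real_rooted h" and g: "real_rooted g"
    and roots_h: "proots h = M + mset (map v [0..<Suc m])"
    and roots_g: "proots g = M + mset (map u [0..<m])"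
    and uv: "\<And>l. l < m \<Longrightarrow> v l < u l \<and> u l < v (Suc l)"
  shows "interlaces h g"
proof -
  have count: "size (filter_mset R (proots g)) \<le> size (filter_mset R (proots h)) \<and>
      size (filter_mset R (proots h)) \<le> Suc (size (filter_mset R (proots g)))"
    if "\<And>a b. a < b \<Longrightarrow> R b \<Longrightarrow> R a" for R
    using card_downward_closed_interlacing[of m v u R, OF uv that]
    unfolding roots_h roots_g filter_union_mset size_union size_filter_mset_map_upt by auto
  have "degree h = Suc (degree g)"
    using h g unfolding real_rooted_def roots_h roots_g by simp
  with count[of "\<lambda>a. a \<le> y" for y] count[of "\<lambda>a. a < y" for y] show ?thesis
    using h g unfolding interlaces_def count_roots_le_def count_roots_less_def by auto
qed

lemma real_rooted_of_increasing_roots: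
  fixes p :: "real poly"
  assumes p0: "p \<noteq> 0" and deg: "degree p = m"
    and mono: "\<And>i j. i < j \<Longrightarrow> j < m \<Longrightarrow> a i < a j"
    and roots: "\<And>i. i < m \<Longrightarrow> poly p (a i) = 0"
  shows "real_rooted p" "proots p = mset (map a [0..<m])"
proof -
  define M where "M = mset (map a [0..<m])"
  have "distinct (map a [0..<m])"
  proof (rule distinct_conv_nth[THEN iffD2], intro allI impI)
    fix i j assume "i < length (map a [0..<m])" "j < length (map a [0..<m])" "i \<noteq> j"
    then show "map a [0..<m] ! i \<noteq> map a [0..<m] ! j"
      using mono[of i j] mono[of j i] by (cases "i < j") auto
  qed
  then have count_M: "count M x \<le> 1" for x unfolding M_def by (simp add: distinct_count_atmost_1)
  have "M \<subseteq># proots p"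
  proof (rule mset_subset_eqI)
    fix x show "count M x \<le> count (proots p) x"
    proof (cases "x \<in># M")
      case True
      then have "count (proots p) x \<ge> 1" using roots p0 unfolding M_def by (auto simp: order_root Suc_le_eq)
      then show ?thesis using count_M[of x] by linarith
    qed (simp add: not_in_iff)
  qed
  moreover have "size (proots p) \<le> size M" using size_proots_le[of p] deg unfolding M_def by simp
  ultimately have "proots p = M" using subset_mset_size_eq by blast
  then show "proots p = mset (map a [0..<m])" "real_rooted p"
    using p0 deg unfolding real_rooted_def M_def by simp_all
qed

lemma pderiv_roots_between_roots:
  fixes F :: "real poly"
  assumes zs: "sorted_wrt (<) zs" and roots: "\<And>z. z \<in> set zs \<Longrightarrow> poly F z = 0"
  obtains \<rho> where "\<And>l. l < length zs - 1 \<Longrightarrow> zs ! l < \<rho> l \<and> \<rho> l < zs ! Suc l \<and> poly (pderiv F) (\<rho> l) = 0"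
    "\<And>l. l < length zs - 1 \<Longrightarrow> \<rho> l \<notin> set zs"
    "\<And>l l'. l < l' \<Longrightarrow> l' < length zs - 1 \<Longrightarrow> \<rho> l < \<rho> l'"
proof -
  define s where "s = length zs"
  have "\<exists>x. zs ! l < x \<and> x < zs ! Suc l \<and> poly (pderiv F) x = 0" if l: "l < s - 1" for l
  proof -
    have lt: "zs ! l < zs ! Suc l" using zs l unfolding s_def by (simp add: sorted_wrt_nth_less)
    from poly_MVT[OF lt, of F] obtain x where x: "zs ! l < x" "x < zs ! Suc l"
      "poly F (zs ! Suc l) - poly F (zs ! l) = (zs ! Suc l - zs ! l) * poly (pderiv F) x" by blast
    have "poly (pderiv F) x = 0" using x(3) roots[of "zs ! l"] roots[of "zs ! Suc l"] l lt
      unfolding s_def by auto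
    with x show ?thesis by blast
  qed
  then obtain \<rho> where \<rho>: "\<And>l. l < s - 1 \<Longrightarrow> zs ! l < \<rho> l \<and> \<rho> l < zs ! Suc l \<and> poly (pderiv F) (\<rho> l) = 0"
    by metis
  show thesis
  proof (rule that[OF \<rho>[unfolded s_def]])
    show "\<rho> l \<notin> set zs" if l: "l < length zs - 1" for l
    proof
      assume "\<rho> l \<in> set zs"
      then obtain i where i: "i < length zs" "zs ! i = \<rho> l" by (metis in_set_conv_nth)
      have "l < i" using sorted_wrt_less_nth_cancel[OF zs, of l i] \<rho>[of l] i l unfolding s_def by auto
      moreover have "i < Suc l"
        using sorted_wrt_less_nth_cancel[OF zs, of i "Suc l"] \<rho>[of l] i l unfolding s_def by auto
      ultimately show False by simp
    qed
    show "\<rho> l < \<rho> l'" if "l < l'" "l' < length zs - 1" for l l'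
    proof -
      have "\<rho> l < zs ! Suc l" using \<rho>[of l] that unfolding s_def by auto
      also have "zs ! Suc l \<le> zs ! l'"
        using that sorted_wrt_nth_less[OF zs, of "Suc l" l']
        by (cases "Suc l = l'") (auto simp: less_imp_le)
      also have "\<dots> < \<rho> l'" using \<rho>[of l'] that unfolding s_def by auto
      finally show ?thesis .
    qed
  qed
qed

text \<open>Rolle: between consecutive distinct roots of \<open>F\<close> lies a root of \<open>F'\<close>; together with the
  roots of \<open>F\<close> of multiplicity \<open>m > 1\<close>, which are roots of \<open>F'\<close> of multiplicity \<open>m - 1\<close>,
  these exhaust the \<open>deg F - 1\<close> roots of \<open>F'\<close>.\<close>

lemma pderiv_interlaces:
  assumes F: "real_rooted F" and deg: "degree F > 0"
  shows "interlaces F (pderiv F)"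
proof -
  have F0: "F \<noteq> 0" and szF: "size (proots F) = degree F" using F by (auto simp: real_rooted_def)
  define Z where "Z = set_mset (proots F)"
  have Z: "Z = {x. poly F x = 0}" using F0 by (simp add: Z_def)
  define zs where "zs = sorted_list_of_set Z"
  define s where "s = length zs"
  have zs_strict: "sorted_wrt (<) zs" unfolding zs_def by simp
  have set_zs: "set zs = Z" by (simp add: zs_def Z_def)
  have "Z \<noteq> {}" using szF deg unfolding Z_def by auto
  then have s0: "s > 0" using set_zs unfolding s_def by auto
  obtain \<rho> where \<rho>: "\<And>l. l < s - 1 \<Longrightarrow> zs ! l < \<rho> l \<and> \<rho> l < zs ! Suc l \<and> poly (pderiv F) (\<rho> l) = 0"
    and \<rho>_not_root: "\<And>l. l < s - 1 \<Longrightarrow> \<rho> l \<notin> Z"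
    and \<rho>_mono: "\<And>l l'. l < l' \<Longrightarrow> l' < s - 1 \<Longrightarrow> \<rho> l < \<rho> l'"
    using pderiv_roots_between_roots[OF zs_strict, of F] set_zs Z unfolding s_def by auto
  define Mz where "Mz = mset zs"
  define Mr where "Mr = mset (map \<rho> [0..<s - 1])"
  define M1 where "M1 = proots F - Mz"
  have count_Mz: "count Mz x = (if x \<in> Z then 1 else 0)" for x
    unfolding Mz_def using set_zs distinct_sorted_list_of_set[of Z]
    by (simp add: zs_def distinct_count_atmost_1)
  have "Mz \<subseteq># proots F"
    by (rule mset_subset_eqI) (use count_Mz F0 in \<open>auto simp: Z_def order_root\<close>)
  then have roots_F: "proots F = M1 + Mz" unfolding M1_def by simp
  have count_Mr: "count Mr x \<le> (if x \<in> Z then 0 else 1)" for x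
  proof -
    have "distinct (map \<rho> [0..<s - 1])"
      by (rule distinct_conv_nth[THEN iffD2])
        (metis \<rho>_mono diff_zero length_map length_upt linorder_neqE_nat nth_map_upt order.asym add_0)
    then have "count Mr x \<le> 1" unfolding Mr_def by (simp add: distinct_count_atmost_1)
    moreover have "x \<in> Z \<Longrightarrow> count Mr x = 0" unfolding Mr_def using \<rho>_not_root
      by (auto simp: count_eq_zero_iff)
    ultimately show ?thesis by auto
  qed
  have F'0: "pderiv F \<noteq> 0" using deg by (simp add: pderiv_eq_0_iff)
  have sub: "M1 + Mr \<subseteq># proots (pderiv F)"
  proof (rule mset_subset_eqI)
    fix x
    show "count (M1 + Mr) x \<le> count (proots (pderiv F)) x"
    proof (cases "x \<in> Z")
      case True
      then have "Polynomial.order x F = Suc (Polynomial.order x (pderiv F))"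
        using order_pderiv[OF F0] Z by auto
      then show ?thesis using True count_Mr[of x] count_Mz[of x] F0 F'0 unfolding M1_def by auto
    next
      case False
      have "count M1 x = 0" using False F0 Z unfolding M1_def by (simp add: order_root)
      moreover have "count Mr x \<le> count (proots (pderiv F)) x"
      proof (cases "x \<in># Mr")
        case True
        then obtain l where "l < s - 1" "x = \<rho> l" unfolding Mr_def by auto
        then have "count (proots (pderiv F)) x \<ge> 1" using \<rho> F'0 by (simp add: order_root Suc_le_eq)
        moreover have "count Mr x \<le> 1" using count_Mr[of x] False by simp
        ultimately show ?thesis by linarith
      qed (simp add: not_in_iff)
      ultimately show ?thesis by simp
    qed
  qed
  have "size Mz = s" "size Mr = s - 1" by (simp_all add: Mz_def Mr_def s_def)
  then have size_F': "size (M1 + Mr) = degree (pderiv F)"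
    using szF s0 unfolding roots_F degree_pderiv size_union by linarith
  then have roots_F': "proots (pderiv F) = M1 + Mr"
    using subset_mset_size_eq[OF sub] size_proots_le[of "pderiv F"] by simp
  have "real_rooted (pderiv F)"
    using F'0 size_F' unfolding real_rooted_def roots_F' by simp
  moreover have "Mz = mset (map (\<lambda>l. zs ! l) [0..<Suc (s - 1)])"
    unfolding Mz_def using s0 by (simp add: map_nth s_def)
  ultimately show ?thesis
    using interlacesI[OF F, where M = M1 and v = "\<lambda>l. zs ! l" and m = "s - 1" and u = \<rho>]
      \<rho> roots_F roots_F' Mr_def by auto
qed

lemma interlaces_linear_mult:
  assumes "interlaces h g" shows "interlaces ([:-c,1:] * h) ([:-c,1:] * g)"
proof -
  have nz: "h \<noteq> 0" "g \<noteq> 0" using assms by (auto simp: interlaces_def real_rooted_def)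
  have "real_rooted ([:-c,1:] * h)" "real_rooted ([:-c,1:] * g)" using assms nz
    by (auto simp: interlaces_def real_rooted_def proots_linear_mult degree_linear_mult)
  with assms nz show ?thesis
    unfolding interlaces_def count_roots_le_def count_roots_less_def
    by (auto simp: proots_linear_mult degree_linear_mult)
qed

lemma interlaces_smult_right: "interlaces h g \<Longrightarrow> c \<noteq> 0 \<Longrightarrow> interlaces h (Polynomial.smult c g)"
  by (auto simp: interlaces_def real_rooted_def count_roots_le_def count_roots_less_def)

lemma interlaces_roots_bounds:
  assumes I: "interlaces F G" and bounds: "\<forall>z\<in>#proots F. lo \<le> z \<and> z \<le> hi"
  shows "\<forall>z\<in>#proots G. lo \<le> z \<and> z \<le> hi"
proof
  fix z assume z: "z \<in># proots G"
  have F: "real_rooted F" and G: "real_rooted G" and deg: "degree F = Suc (degree G)"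
    and le: "count_roots_le G y \<le> count_roots_le F y"
    and less: "count_roots_less F y \<le> Suc (count_roots_less G y)" for y
    using I by (auto simp: interlaces_def)
  show "lo \<le> z \<and> z \<le> hi"
  proof (rule ccontr)
    assume "\<not> (lo \<le> z \<and> z \<le> hi)"
    then consider "z < lo" | "hi < z" by linarith
    then show False
    proof cases
      case 1
      then have "count_roots_le F z = 0"
        using bounds by (auto simp: count_roots_le_def filter_mset_eq_mempty_iff)
      moreover have "count_roots_le G z \<noteq> 0" using z by (auto simp: count_roots_le_def)
      ultimately show False using le[of z] by simp
    next
      case 2
      then have "filter_mset (\<lambda>a. a < z) (proots F) = proots F"
        using bounds by (auto simp: filter_mset_eq_conv)
      then have "count_roots_less F z = degree F"
        using F by (simp add: count_roots_less_def real_rooted_def)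
      moreover have "size (filter_mset (\<lambda>a. \<not> a < z) (proots G)) \<noteq> 0" using z by auto
      then have "count_roots_less G z < degree G"
        using size_filter_mset_partition[of "\<lambda>a. a < z" "proots G"] G
        unfolding count_roots_less_def real_rooted_def by linarith
      ultimately show False using less[of z] deg by simp
    qed
  qed
qed

lemma length_sorted_list_of_multiset [simp]: "length (sorted_list_of_multiset M) = size M"
  by (metis mset_sorted_list_of_multiset size_mset)

lemma poly_real_rooted_sorted_roots:
  assumes "real_rooted p"
  shows "poly p t = lead_coeff p * (\<Prod>i<degree p. t - sorted_list_of_multiset (proots p) ! i)"
proof -
  define zs where "zs = sorted_list_of_multiset (proots p)"
  have "(\<Prod>a\<in>#proots p. t - a) = prod_list (map (\<lambda>a. t - a) zs)"
    unfolding zs_def by (metis mset_map mset_sorted_list_of_multiset prod_mset_prod_list)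
  also have "\<dots> = (\<Prod>i<length zs. t - zs ! i)"
    by (subst prod.list_conv_set_nth) (auto simp: atLeast0LessThan)
  finally show ?thesis
    using assms poly_real_rooted[OF assms, of t] unfolding zs_def
    by (metis real_rooted_def length_sorted_list_of_multiset)
qed

lemma count_roots_le_sorted_roots:
  "count_roots_le p y = card {i. i < size (proots p) \<and> sorted_list_of_multiset (proots p) ! i \<le> y}"
proof -
  define zs where "zs = sorted_list_of_multiset (proots p)"
  have "count_roots_le p y = length (filter (\<lambda>a. a \<le> y) zs)"
    unfolding count_roots_le_def zs_def by (metis mset_filter mset_sorted_list_of_multiset size_mset)
  then show ?thesis by (simp add: length_filter_conv_card zs_def)
qed

lemma interlaces_sorted_roots:
  assumes I: "interlaces h g" and i: "i < degree g"
  defines "\<alpha> \<equiv> sorted_list_of_multiset (proots h)" and "\<beta> \<equiv> sorted_list_of_multiset (proots g)"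
  shows "\<alpha> ! i \<le> \<beta> ! i" "\<beta> ! i \<le> \<alpha> ! (i + 1)"
proof -
  define m where "m = degree g"
  have len: "length \<alpha> = Suc m" "length \<beta> = m"
    using I unfolding interlaces_def real_rooted_def \<alpha>_def \<beta>_def m_def by auto
  have sorted: "sorted \<alpha>" "sorted \<beta>" unfolding \<alpha>_def \<beta>_def by simp_all
  have le: "card {j. j < m \<and> \<beta> ! j \<le> y} \<le> card {j. j < Suc m \<and> \<alpha> ! j \<le> y}"
    and le_Suc: "card {j. j < Suc m \<and> \<alpha> ! j \<le> y} \<le> Suc (card {j. j < m \<and> \<beta> ! j \<le> y})" for y
    using I count_roots_le_sorted_roots[of h y] count_roots_le_sorted_roots[of g y] len
    unfolding interlaces_def \<alpha>_def \<beta>_def by (metis length_sorted_list_of_multiset)+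
  have below: "card {j. j < l \<and> xs ! j \<le> y} \<le> p" if "sorted xs" "y < xs ! p" "p < l" "l \<le> length xs"
    for xs :: "real list" and l y p
  proof -
    have "{j. j < l \<and> xs ! j \<le> y} \<subseteq> {..<p}"
    proof
      fix j assume j: "j \<in> {j. j < l \<and> xs ! j \<le> y}"
      show "j \<in> {..<p}"
      proof (rule ccontr)
        assume "j \<notin> {..<p}"
        then have "xs ! p \<le> xs ! j" using sorted_nth_mono[OF that(1), of p j] j that by auto
        then show False using j that by simp
      qed
    qed
    then show ?thesis using card_mono[of "{..<p}"] by fastforce
  qed
  have atleast: "Suc j \<le> card {l. l < n \<and> xs ! l \<le> xs ! j}" if "sorted xs" "j < n" "n \<le> length xs"
    for xs :: "real list" and j n
  proof -
    have "{..j} \<subseteq> {l. l < n \<and> xs ! l \<le> xs ! j}" using sorted_nth_mono[OF that(1)] that by auto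
    then show ?thesis by (metis card_atMost card_mono finite_Collect_conjI finite_Collect_less_nat)
  qed
  show "\<alpha> ! i \<le> \<beta> ! i"
    using below[OF sorted(1), where l = "Suc m" and y = "\<beta> ! i" and p = i] atleast[OF sorted(2), where j = i and n = m] le[of "\<beta> ! i"] len i
    unfolding m_def by fastforce
  show "\<beta> ! i \<le> \<alpha> ! (i + 1)"
    using below[OF sorted(2), where l = m and y = "\<alpha> ! (i + 1)" and p = i] atleast[OF sorted(1), where j = "i + 1" and n = "Suc m"]
      le_Suc[of "\<alpha> ! (i + 1)"] len i
    unfolding m_def by fastforce
qed

lemma interlaces_sorted_factorizations:
  assumes I: "interlaces h g"
  obtains \<alpha> \<beta> where "length \<alpha> = Suc (degree g)" "sorted \<alpha>"
    "\<And>t. poly h t = lead_coeff h * (\<Prod>i<Suc (degree g). t - \<alpha> ! i)"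
    "length \<beta> = degree g" "sorted \<beta>" "set \<beta> = set_mset (proots g)"
    "\<And>t. poly g t = lead_coeff g * (\<Prod>i<degree g. t - \<beta> ! i)"
    "\<And>i. i < degree g \<Longrightarrow> \<alpha> ! i \<le> \<beta> ! i \<and> \<beta> ! i \<le> \<alpha> ! (i + 1)"
proof
  have h: "real_rooted h" and g: "real_rooted g" and deg: "degree h = Suc (degree g)"
    using I by (auto simp: interlaces_def)
  show "length (sorted_list_of_multiset (proots h)) = Suc (degree g)"
    "length (sorted_list_of_multiset (proots g)) = degree g"
    using h g deg by (simp_all add: real_rooted_def)
  show "poly h t = lead_coeff h * (\<Prod>i<Suc (degree g). t - sorted_list_of_multiset (proots h) ! i)"
    "poly g t = lead_coeff g * (\<Prod>i<degree g. t - sorted_list_of_multiset (proots g) ! i)" for t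
    using poly_real_rooted_sorted_roots[OF h] poly_real_rooted_sorted_roots[OF g] deg by simp_all
  show "sorted_list_of_multiset (proots h) ! i \<le> sorted_list_of_multiset (proots g) ! i \<and>
      sorted_list_of_multiset (proots g) ! i \<le> sorted_list_of_multiset (proots h) ! (i + 1)"
    if "i < degree g" for i
    using interlaces_sorted_roots[OF I that] by simp
qed simp_all

lemma interlaced_between_bounds:
  fixes \<alpha> \<beta> :: "real list"
  assumes "\<And>i. i < m \<Longrightarrow> \<alpha> ! i \<le> \<beta> ! i \<and> \<beta> ! i \<le> \<alpha> ! (i + 1)"
    and "\<And>i. i < m \<Longrightarrow> lo \<le> \<beta> ! i \<and> \<beta> ! i \<le> hi"
    and "0 < j" "j < m"
  shows "lo \<le> \<alpha> ! j \<and> \<alpha> ! j \<le> hi"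
proof -
  have j: "j - 1 < m" "j - 1 + 1 = j" using assms(3,4) by auto
  show ?thesis
    using assms(1)[OF j(1)] assms(2)[OF j(1)] assms(1)[OF assms(4)] assms(2)[OF assms(4)] j(2) by auto
qed

section \<open>The interlacing cone\<close>

definition interlacing_cone :: "real poly \<Rightarrow> real poly \<Rightarrow> bool" where
  "interlacing_cone g h \<longleftrightarrow> (\<forall>c. poly g c = 0 \<longrightarrow>
     (\<exists>q. h = [:-c,1:] ^ (Polynomial.order c g - 1) * q \<and>
          (-1) ^ count_roots_greater g c * poly q c \<le> 0))"

lemma real_rooted_cofactor_sign:
  assumes h: "real_rooted h" and lc: "lead_coeff h > 0" and hq: "h = [:-c,1:] ^ m * q"
  shows "m < Polynomial.order c h \<Longrightarrow> poly q c = 0"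
    and "m = Polynomial.order c h \<Longrightarrow> (-1) ^ count_roots_greater h c * poly q c > 0"
proof -
  have h0: "h \<noteq> 0" using h by (auto simp: real_rooted_def)
  have q0: "q \<noteq> 0" using h0 hq by auto
  have roots: "proots h = replicate_mset m c + proots q" using hq q0
    by (simp add: proots_mult proots_power)
  have "real_rooted q" using h hq real_rooted_mult_factors by blast
  have count: "count (proots q) c = Polynomial.order c h - m" using roots h0
    by (simp add: count_proots[symmetric])
  show "poly q c = 0" if "m < Polynomial.order c h"
  proof -
    have "c \<in># proots q" using that count by (simp flip: count_greater_zero_iff)
    then show ?thesis using q0 by simp
  qed
  assume "m = Polynomial.order c h"
  then have "c \<notin># proots q" using count by (simp add: count_eq_zero_iff)
  then have "(-1::real) ^ size (filter_mset (\<lambda>a. c < a) (proots q)) * (\<Prod>a\<in>#proots q. c - a) > 0"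
    by (rule sign_prod_mset_linear)
  moreover have "filter_mset (\<lambda>a. c < a) (proots h) = filter_mset (\<lambda>a. c < a) (proots q)"
    unfolding roots by (induction m) auto
  moreover have "lead_coeff q = lead_coeff h" using hq by (simp add: lead_coeff_mult lead_coeff_power)
  ultimately show "(-1) ^ count_roots_greater h c * poly q c > 0"
    using lc poly_real_rooted[OF \<open>real_rooted q\<close>, of c]
    by (simp add: count_roots_greater_def mult.left_commute)
qed

lemma interlaces_in_cone:
  assumes I: "interlaces h g" and lc: "lead_coeff h > 0"
  shows "interlacing_cone g h"
  unfolding interlacing_cone_def
proof (intro allI impI)
  fix c assume gc: "poly g c = 0"
  have h: "real_rooted h" and g: "real_rooted g" and deg: "degree h = Suc (degree g)"
    and counts: "count_roots_le g c \<le> count_roots_le h c" "count_roots_le h c \<le> Suc (count_roots_le g c)"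
      "count_roots_less g c \<le> count_roots_less h c" "count_roots_less h c \<le> Suc (count_roots_less g c)"
    using I by (auto simp: interlaces_def)
  have h0: "h \<noteq> 0" and g0: "g \<noteq> 0" using h g by (auto simp: real_rooted_def)
  note ord = order_eq_count_roots[OF g0, of c] order_eq_count_roots[OF h0, of c]
    count_roots_le_eq[of g c] count_roots_le_eq[of h c]
  have "Polynomial.order c g \<ge> 1" using gc g0 by (simp add: order_root Suc_le_eq)
  have ge: "Polynomial.order c g - 1 \<le> Polynomial.order c h" using ord counts by linarith
  then obtain q where q: "h = [:-c,1:] ^ (Polynomial.order c g - 1) * q"
    by (metis dvdE order_divides)
  have "(-1) ^ count_roots_greater g c * poly q c \<le> 0"
  proof (cases "Polynomial.order c g - 1 < Polynomial.order c h")
    case True then show ?thesis using real_rooted_cofactor_sign(1)[OF h lc q] by simp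
  next
    case False
    then have eq: "Polynomial.order c g - 1 = Polynomial.order c h" using ge by simp
    then have "count_roots_le h c = count_roots_le g c"
      using ord counts \<open>Polynomial.order c g \<ge> 1\<close> by linarith
    then have "count_roots_greater h c = Suc (count_roots_greater g c)"
      using count_roots_le_plus_greater[of h c] count_roots_le_plus_greater[of g c] h g deg
      unfolding real_rooted_def by linarith
    then show ?thesis using real_rooted_cofactor_sign(2)[OF h lc q eq] by simp
  qed
  with q show "\<exists>q. h = [:-c,1:] ^ (Polynomial.order c g - 1) * q \<and>
      (-1) ^ count_roots_greater g c * poly q c \<le> 0" by blast
qed

lemma interlaced_neg_in_cone:
  assumes I: "interlaces h g" and lc: "lead_coeff g > 0"
  shows "interlacing_cone h (-g)"
  unfolding interlacing_cone_def
proof (intro allI impI)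
  fix c assume hc: "poly h c = 0"
  have h: "real_rooted h" and g: "real_rooted g" and deg: "degree h = Suc (degree g)"
    and counts: "count_roots_le g c \<le> count_roots_le h c" "count_roots_le h c \<le> Suc (count_roots_le g c)"
      "count_roots_less g c \<le> count_roots_less h c" "count_roots_less h c \<le> Suc (count_roots_less g c)"
    using I by (auto simp: interlaces_def)
  have h0: "h \<noteq> 0" and g0: "g \<noteq> 0" using h g by (auto simp: real_rooted_def)
  note ord = order_eq_count_roots[OF g0, of c] order_eq_count_roots[OF h0, of c]
    count_roots_le_eq[of g c] count_roots_le_eq[of h c]
  have "Polynomial.order c h \<ge> 1" using hc h0 by (simp add: order_root Suc_le_eq)
  have ge: "Polynomial.order c h - 1 \<le> Polynomial.order c g" using ord counts by linarith
  then obtain q where q: "g = [:-c,1:] ^ (Polynomial.order c h - 1) * q"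
    by (metis dvdE order_divides)
  have "(-1) ^ count_roots_greater h c * poly (-q) c \<le> 0"
  proof (cases "Polynomial.order c h - 1 < Polynomial.order c g")
    case True then show ?thesis using real_rooted_cofactor_sign(1)[OF g lc q] by simp
  next
    case False
    then have eq: "Polynomial.order c h - 1 = Polynomial.order c g" using ge by simp
    then have "count_roots_le h c = Suc (count_roots_le g c)"
      using ord counts \<open>Polynomial.order c h \<ge> 1\<close> by linarith
    then have "count_roots_greater h c = count_roots_greater g c"
      using count_roots_le_plus_greater[of h c] count_roots_le_plus_greater[of g c] h g deg
      unfolding real_rooted_def by linarith
    then show ?thesis using real_rooted_cofactor_sign(2)[OF g lc q eq] by simp
  qed
  moreover have "-g = [:-c,1:] ^ (Polynomial.order c h - 1) * (-q)" using q by simp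
  ultimately show "\<exists>q. -g = [:-c,1:] ^ (Polynomial.order c h - 1) * q \<and>
      (-1) ^ count_roots_greater h c * poly q c \<le> 0" by blast
qed

lemma interlacing_cone_zero: "interlacing_cone g 0"
  unfolding interlacing_cone_def by (auto intro: exI[of _ 0])

lemma interlacing_cone_add:
  assumes "interlacing_cone g h1" "interlacing_cone g h2"
  shows "interlacing_cone g (h1 + h2)"
  unfolding interlacing_cone_def
proof (intro allI impI)
  fix c assume "poly g c = 0"
  then obtain q1 q2 where
      "h1 = [:-c,1:] ^ (Polynomial.order c g - 1) * q1" "(-1) ^ count_roots_greater g c * poly q1 c \<le> 0"
      "h2 = [:-c,1:] ^ (Polynomial.order c g - 1) * q2" "(-1) ^ count_roots_greater g c * poly q2 c \<le> 0"
    using assms unfolding interlacing_cone_def by blast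
  then show "\<exists>q. h1 + h2 = [:-c,1:] ^ (Polynomial.order c g - 1) * q \<and>
      (-1) ^ count_roots_greater g c * poly q c \<le> 0"
    by (intro exI[of _ "q1 + q2"]) (auto simp: algebra_simps)
qed

lemma interlacing_cone_smult:
  assumes "interlacing_cone g h" "a \<ge> 0"
  shows "interlacing_cone g (Polynomial.smult a h)"
  unfolding interlacing_cone_def
proof (intro allI impI)
  fix c assume "poly g c = 0"
  then obtain q where
      "h = [:-c,1:] ^ (Polynomial.order c g - 1) * q" "(-1) ^ count_roots_greater g c * poly q c \<le> 0"
    using assms(1) unfolding interlacing_cone_def by blast
  then show "\<exists>q. Polynomial.smult a h = [:-c,1:] ^ (Polynomial.order c g - 1) * q \<and>
      (-1) ^ count_roots_greater g c * poly q c \<le> 0"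
    using assms(2)
    by (intro exI[of _ "Polynomial.smult a q"]) (simp add: mult.left_commute[of _ a] mult_nonneg_nonpos)
qed

lemma interlacing_cone_sum:
  "(\<And>j. j \<in> J \<Longrightarrow> interlacing_cone g (f j)) \<Longrightarrow> interlacing_cone g (\<Sum>j\<in>J. f j)"
  by (induction J rule: infinite_finite_induct)
    (simp_all add: interlacing_cone_zero interlacing_cone_add)

lemma interlacing_cone_linear_mult_self:
  assumes g0: "g \<noteq> 0" shows "interlacing_cone g ([:a,1:] * g)"
  unfolding interlacing_cone_def
proof (intro allI impI)
  fix c assume "poly g c = 0"
  then have pow: "[:-c,1:] ^ Polynomial.order c g = [:-c,1:] ^ (Polynomial.order c g - 1) * [:-c,1:]"
    using g0 by (subst power_Suc2[symmetric]) (simp add: order_root)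
  obtain g1 where "g = [:-c,1:] ^ Polynomial.order c g * g1"
    using order_decomp[OF g0] by blast
  then have "[:a,1:] * g = [:a,1:] * ([:-c,1:] ^ (Polynomial.order c g - 1) * [:-c,1:] * g1)"
    unfolding pow by simp
  then have "[:a,1:] * g = [:-c,1:] ^ (Polynomial.order c g - 1) * ([:a,1:] * [:-c,1:] * g1)"
    by (simp add: ac_simps)
  then show "\<exists>q. [:a,1:] * g = [:-c,1:] ^ (Polynomial.order c g - 1) * q \<and>
      (-1) ^ count_roots_greater g c * poly q c \<le> 0"
    by (intro exI[of _ "[:a,1:] * [:-c,1:] * g1"]) simp
qed

lemma interlacing_cone_cancel_linear:
  assumes C: "interlacing_cone ([:-c,1:] * g) ([:-c,1:] * h)" and g0: "g \<noteq> 0"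
  shows "interlacing_cone g h"
  unfolding interlacing_cone_def
proof (intro allI impI)
  fix d assume gd: "poly g d = 0"
  have "count (proots ([:-c,1:] * g)) d = count (proots g) d + (if d = c then 1 else 0)"
    using g0 by (simp add: proots_linear_mult)
  then have ord: "Polynomial.order d ([:-c,1:] * g) = Polynomial.order d g + (if d = c then 1 else 0)"
    using g0 by simp
  have greater: "count_roots_greater ([:-c,1:] * g) d = count_roots_greater g d + (if d < c then 1 else 0)"
    using g0 by (auto simp: count_roots_greater_def proots_linear_mult)
  obtain q where q: "[:-c,1:] * h = [:-d,1:] ^ (Polynomial.order d ([:-c,1:] * g) - 1) * q"
    and sign: "(-1) ^ count_roots_greater ([:-c,1:] * g) d * poly q d \<le> 0"
    using C gd unfolding interlacing_cone_def by auto
  show "\<exists>q. h = [:-d,1:] ^ (Polynomial.order d g - 1) * q \<and> (-1) ^ count_roots_greater g d * poly q d \<le> 0"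
  proof (cases "d = c")
    case True
    have "Polynomial.order d g \<ge> 1" using gd g0 by (simp add: order_root Suc_le_eq)
    then have "Polynomial.order d ([:-c,1:] * g) - 1 = Suc (Polynomial.order d g - 1)"
      using ord True by simp
    then have "[:-c,1:] * h = [:-c,1:] * ([:-c,1:] ^ (Polynomial.order d g - 1) * q)"
      using q True by (simp add: mult.assoc)
    then show ?thesis using sign greater True by auto
  next
    case False
    have "poly q c = 0" using arg_cong[OF q, of "\<lambda>p. poly p c"] False by simp
    then obtain q1 where q1: "q = [:-c,1:] * q1" by (metis dvdE poly_eq_0_iff_dvd)
    have "[:-c,1:] * h = [:-c,1:] * ([:-d,1:] ^ (Polynomial.order d g - 1) * q1)"
      using q ord False unfolding q1 by (simp add: ac_simps)
    then have h: "h = [:-d,1:] ^ (Polynomial.order d g - 1) * q1" by simp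
    define X where "X = (-1::real) ^ count_roots_greater g d * poly q1 d"
    have "(-1) ^ count_roots_greater ([:-c,1:] * g) d * poly q d = \<bar>d - c\<bar> * X"
    proof (cases "d < c")
      case True
      then show ?thesis unfolding X_def q1 greater by (simp add: algebra_simps)
    next
      case False
      then show ?thesis unfolding X_def q1 greater by simp
    qed
    then have "\<bar>d - c\<bar> * X \<le> 0" using sign by simp
    then have "X \<le> 0" using False by (simp add: mult_le_0_iff)
    with h show ?thesis unfolding X_def by blast
  qed
qed

lemma poly_signs_at_infinity:
  assumes lc: "lead_coeff p > (0::real)"
  shows "\<exists>X. \<forall>x\<ge>X. poly p x > 0 \<and> (-1) ^ degree p * poly p (-x) > 0"
proof -
  obtain X1 where X1: "\<forall>x\<ge>X1. lead_coeff p \<le> poly p x" using poly_pinfty_gt_lc[OF lc] by blast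
  define p' where "p' = Polynomial.smult ((-1) ^ degree p) (pcompose p [:0,-1:])"
  have "lead_coeff (pcompose p [:0,-1:]) = lead_coeff p * (-1) ^ degree p"
    by (subst lead_coeff_comp) auto
  then have "lead_coeff p' = lead_coeff p"
    unfolding p'_def by (simp flip: power_mult_distrib)
  then obtain X2 where X2: "\<forall>x\<ge>X2. lead_coeff p \<le> poly p' x" using poly_pinfty_gt_lc[of p'] lc by auto
  have "poly p' x = (-1) ^ degree p * poly p (-x)" for x unfolding p'_def by (simp add: poly_pcompose)
  then have "poly p x > 0 \<and> (-1) ^ degree p * poly p (-x) > 0" if "x \<ge> max X1 X2" for x
    using X1 X2 lc that by (metis max.boundedE order_less_le_trans)
  then show ?thesis by blast
qed

lemma poly_root_between_opposite_signs:
  fixes p :: "real poly"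
  assumes "a \<le> b" "(-1) ^ Suc m * poly p a > 0" "(-1) ^ m * poly p b > 0"
  shows "\<exists>x. a < x \<and> x < b \<and> poly p x = 0"
proof -
  have neg: "poly p a * poly p b < 0"
    using assms(2,3) by (cases "even m") (auto simp: mult_less_0_iff)
  then have "a < b" using assms(1) by (cases "a = b") (auto simp: mult_less_0_iff)
  with neg show ?thesis using poly_IVT by blast
qed

lemma real_rooted_of_alternating_signs:
  assumes zs: "sorted_wrt (<) zs" and deg: "degree h = Suc (length zs)" and lc: "lead_coeff h > 0"
    and sign: "\<And>l. l < length zs \<Longrightarrow> (-1) ^ (length zs - l) * poly h (zs ! l) > 0"
  obtains a where "real_rooted h" "proots h = mset (map a [0..<Suc (length zs)])"
    "\<And>l. l < length zs \<Longrightarrow> a l < zs ! l \<and> zs ! l < a (Suc l)"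
proof -
  define s where "s = length zs"
  have h0: "h \<noteq> 0" using lc by auto
  obtain X0 where X0: "\<forall>x\<ge>X0. poly h x > 0 \<and> (-1) ^ degree h * poly h (-x) > 0"
    using poly_signs_at_infinity[OF lc] by blast
  define X where "X = \<bar>X0\<bar> + (\<Sum>z\<leftarrow>zs. \<bar>z\<bar>) + 1"
  have X_beyond: "\<bar>zs ! l\<bar> < X" if "l < s" for l
  proof -
    have "\<bar>zs ! l\<bar> \<le> (\<Sum>z\<leftarrow>zs. \<bar>z\<bar>)" using that by (intro member_le_sum_list) (auto simp: s_def)
    then show ?thesis using abs_ge_zero[of X0] unfolding X_def by linarith
  qed
  have "(\<Sum>z\<leftarrow>zs. \<bar>z\<bar>) \<ge> 0" by (induction zs) auto
  then have "X \<ge> X0" "X > 0" unfolding X_def by linarith+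
  then have X: "poly h X > 0" "(-1) ^ Suc s * poly h (-X) > 0" using X0 deg unfolding s_def by auto
  define b where "b i = (if i = 0 then -X else if i \<le> s then zs ! (i - 1) else X)" for i
  have b_sign: "(-1) ^ (Suc s - i) * poly h (b i) > 0" if i: "i \<le> Suc s" for i
  proof -
    consider "i = 0" | "0 < i" "i \<le> s" | "i = Suc s" using i by (metis le_SucE neq0_conv)
    then show ?thesis
    proof cases
      case 1 then show ?thesis using X by (simp add: b_def)
    next
      case 2 then show ?thesis using sign[of "i - 1"] by (simp add: b_def s_def Suc_diff_le)
    next
      case 3 then show ?thesis using X by (simp add: b_def)
    qed
  qed
  have b_mono: "b i \<le> b (Suc i)" for i
  proof -
    consider "i = 0" | "0 < i" "Suc i \<le> s" | "0 < i" "i = s" | "s < i"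
      by (cases "i = 0"; cases "i < s"; cases "i = s") auto
    then show ?thesis
    proof cases
      case 1 then show ?thesis using X_beyond[of 0] \<open>X > 0\<close> by (auto simp: b_def)
    next
      case 2 then show ?thesis using sorted_wrt_nth_less[OF zs, of "i - 1" i] by (simp add: b_def s_def)
    next
      case 3 then show ?thesis using X_beyond[of "i - 1"] by (simp add: b_def)
    qed (simp add: b_def)
  qed
  have "\<exists>x. b i < x \<and> x < b (Suc i) \<and> poly h x = 0" if "i \<le> s" for i
    using b_sign[of i] b_sign[of "Suc i"] that
    by (intro poly_root_between_opposite_signs[OF b_mono, of "s - i"]) (simp_all add: Suc_diff_le)
  then obtain a where a: "\<And>i. i \<le> s \<Longrightarrow> b i < a i \<and> a i < b (Suc i) \<and> poly h (a i) = 0"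
    by metis
  have a_mono: "a i < a j" if "i < j" "j \<le> s" for i j
  proof -
    have "a i < b (Suc i)" using a[of i] that by auto
    also have "\<dots> \<le> b j" using lift_Suc_mono_le[of b, OF b_mono] that by simp
    also have "\<dots> < a j" using a[of j] that by auto
    finally show ?thesis .
  qed
  have "degree h = Suc s" using deg unfolding s_def .
  from real_rooted_of_increasing_roots[OF h0 this, of a] a a_mono
  have "real_rooted h" "proots h = mset (map a [0..<Suc s])" by (simp_all add: less_Suc_eq_le)
  then show thesis
  proof (rule that[unfolded s_def[symmetric]])
    show "a l < zs ! l \<and> zs ! l < a (Suc l)" if "l < s" for l
      using a[of l] a[of "Suc l"] that unfolding b_def by auto
  qed
qed

text \<open>Without common roots, all roots of \<open>g\<close> are simple and \<open>h\<close> alternates in sign on them.\<close>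

lemma interlaces_of_cone_no_common_root:
  assumes g: "real_rooted g" and C: "interlacing_cone g h"
    and deg: "degree h = Suc (degree g)" and lc: "lead_coeff h > 0"
    and no_common: "\<And>c. poly g c = 0 \<Longrightarrow> poly h c \<noteq> 0"
  shows "interlaces h g"
proof -
  have g0: "g \<noteq> 0" using g by (simp add: real_rooted_def)
  define Z where "Z = {x. poly g x = 0}"
  have simple: "Polynomial.order c g = 1 \<and> (-1) ^ count_roots_greater g c * poly h c < 0"
    if "c \<in> Z" for c
  proof -
    have gc: "poly g c = 0" using that by (simp add: Z_def)
    obtain q where q: "h = [:-c,1:] ^ (Polynomial.order c g - 1) * q"
      and sign: "(-1) ^ count_roots_greater g c * poly q c \<le> 0"
      using C gc unfolding interlacing_cone_def by blast
    have hc: "poly h c \<noteq> 0" using no_common gc by blast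
    then have "Polynomial.order c g - 1 = 0" using q by (auto simp: zero_power)
    moreover have "Polynomial.order c g \<ge> 1" using gc g0 by (simp add: order_root Suc_le_eq)
    ultimately show ?thesis using q sign hc by (simp add: le_less)
  qed
  define zs where "zs = sorted_list_of_set Z"
  define s where "s = length zs"
  have zs: "sorted_wrt (<) zs" unfolding zs_def by simp
  have set_zs: "set zs = Z" using poly_roots_finite[OF g0] by (simp add: zs_def Z_def)
  have roots_g: "proots g = mset zs"
  proof (rule multiset_eqI)
    fix x show "count (proots g) x = count (mset zs) x"
      using simple[of x] set_zs g0 distinct_sorted_list_of_set[of Z]
      by (auto simp: Z_def order_root distinct_count_atmost_1 zs_def)
  qed
  have deg_g: "degree g = s" using g roots_g by (simp add: real_rooted_def s_def)
  have greater: "count_roots_greater g (zs ! l) = s - Suc l" if "l < s" for l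
  proof -
    have "count_roots_greater g (zs ! l) = card {i. i < s \<and> zs ! l < zs ! i}"
      using size_filter_mset_map_upt[of "\<lambda>a. zs ! l < a" "\<lambda>i. zs ! i" s]
      unfolding count_roots_greater_def roots_g s_def by (simp add: map_nth)
    also have "{i. i < s \<and> zs ! l < zs ! i} = {Suc l..<s}"
    proof (intro Set.set_eqI iffI)
      fix i assume "i \<in> {i. i < s \<and> zs ! l < zs ! i}"
      then show "i \<in> {Suc l..<s}" using sorted_wrt_less_nth_cancel[OF zs, of l i] that
        unfolding s_def by auto
    next
      fix i assume "i \<in> {Suc l..<s}"
      then show "i \<in> {i. i < s \<and> zs ! l < zs ! i}" using sorted_wrt_nth_less[OF zs, of l i] that
        unfolding s_def by auto
    qed
    finally show ?thesis by simp
  qed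
  have sign: "(-1) ^ (s - l) * poly h (zs ! l) > 0" if "l < s" for l
  proof -
    have "s - l = Suc (s - Suc l)" using that by simp
    then show ?thesis using simple[of "zs ! l"] greater[OF that] that set_zs unfolding s_def by auto
  qed
  obtain a where h: "real_rooted h" and roots_h: "proots h = mset (map a [0..<Suc s])"
    and between: "\<And>l. l < s \<Longrightarrow> a l < zs ! l \<and> zs ! l < a (Suc l)"
    using real_rooted_of_alternating_signs[OF zs _ lc, folded s_def, OF _ sign] deg deg_g by blast
  have "proots g = {#} + mset (map (\<lambda>l. zs ! l) [0..<s])"
    unfolding roots_g s_def by (simp add: map_nth)
  then show ?thesis using interlacesI[OF h g, of "{#}" a s] roots_h between by simp
qed

lemma interlaces_of_cone:
  assumes "real_rooted g" "interlacing_cone g h" "degree h = Suc (degree g)" "lead_coeff h > 0"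
  shows "interlaces h g"
  using assms
proof (induction "degree g" arbitrary: g h rule: less_induct)
  case (less g h)
  show ?case
  proof (cases "\<exists>c. poly g c = 0 \<and> poly h c = 0")
    case False
    show ?thesis by (rule interlaces_of_cone_no_common_root[OF less.prems]) (use False in blast)
  next
    case True
    then obtain c where "poly g c = 0" "poly h c = 0" by blast
    then obtain g1 h1 where g1: "g = [:-c,1:] * g1" and h1: "h = [:-c,1:] * h1"
      by (meson dvdE poly_eq_0_iff_dvd)
    have g10: "g1 \<noteq> 0" using less.prems(1) g1 by (auto simp: real_rooted_def)
    have h10: "h1 \<noteq> 0" using less.prems(4) h1 by auto
    have "real_rooted g1" using less.prems(1) g1 real_rooted_mult_factors by blast
    moreover have "interlacing_cone g1 h1"
      using interlacing_cone_cancel_linear[OF _ g10] less.prems(2) g1 h1 by simp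
    moreover have "degree g = Suc (degree g1)" "degree h = Suc (degree h1)"
      using g1 g10 h1 h10 by (simp_all add: degree_linear_mult)
    moreover have "lead_coeff h1 > 0" using less.prems(4) h1 by (simp add: lead_coeff_mult)
    ultimately have "interlaces h1 g1" using less.prems(3) by (intro less.hyps) simp_all
    then show ?thesis unfolding g1 h1 by (rule interlaces_linear_mult)
  qed
qed

section \<open>Elementary symmetric functions of shifted lists\<close>

definition esym_set :: "nat \<Rightarrow> nat set \<Rightarrow> (nat \<Rightarrow> real) \<Rightarrow> real" where
  "esym_set j I f = (\<Sum>S | S \<subseteq> I \<and> card S = j. \<Prod>i\<in>S. f i)"

lemma esym_eq_esym_set: "esym j xs = esym_set j {..<length xs} (\<lambda>i. xs ! i)"
  unfolding esym_def esym_set_def by simp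

lemma esym_set_cong: "(\<And>i. i \<in> I \<Longrightarrow> f i = g i) \<Longrightarrow> esym_set j I f = esym_set j I g"
  unfolding esym_set_def by (intro sum.cong prod.cong) auto

lemma esym_set_reindex:
  assumes inj: "inj_on h I"
  shows "esym_set j (h ` I) f = esym_set j I (f \<circ> h)"
proof -
  have card_image_subset: "card (h ` T) = card T" if "T \<subseteq> I" for T
    using that inj by (metis card_image inj_on_subset)
  have eq: "{S. S \<subseteq> h ` I \<and> card S = j} = image h ` {S. S \<subseteq> I \<and> card S = j}"
    by (auto simp: subset_image_iff card_image_subset image_iff)
  have inj_image: "inj_on (image h) {S. S \<subseteq> I \<and> card S = j}"
    using inj_on_image_Pow[OF inj] by (rule inj_on_subset) auto
  have "esym_set j (h ` I) f = (\<Sum>T\<in>{S. S \<subseteq> I \<and> card S = j}. \<Prod>i\<in>h ` T. f i)"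
    unfolding esym_set_def eq by (simp add: sum.reindex[OF inj_image])
  also have "\<dots> = (\<Sum>T\<in>{S. S \<subseteq> I \<and> card S = j}. \<Prod>i\<in>T. f (h i))"
  proof (rule sum.cong)
    fix T assume "T \<in> {S. S \<subseteq> I \<and> card S = j}"
    then have "inj_on h T" using inj by (auto intro: inj_on_subset)
    then show "(\<Prod>i\<in>h ` T. f i) = (\<Prod>i\<in>T. f (h i))" by (simp add: prod.reindex)
  qed simp
  finally show ?thesis unfolding esym_set_def by simp
qed

lemma esym_set_insert:
  assumes fin: "finite I" and a: "a \<notin> I"
  shows "esym_set (Suc j) (insert a I) f = esym_set (Suc j) I f + f a * esym_set j I f"
proof -
  have fin_subset: "finite S" if "S \<subseteq> insert a I" for S using that fin finite_subset by auto
  have eq: "{S. S \<subseteq> insert a I \<and> card S = Suc j} =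
      {S. S \<subseteq> I \<and> card S = Suc j} \<union> insert a ` {S. S \<subseteq> I \<and> card S = j}"
  proof (intro Set.set_eqI iffI)
    fix S assume S: "S \<in> {S. S \<subseteq> insert a I \<and> card S = Suc j}"
    show "S \<in> {S. S \<subseteq> I \<and> card S = Suc j} \<union> insert a ` {S. S \<subseteq> I \<and> card S = j}"
    proof (cases "a \<in> S")
      case True
      then have "S = insert a (S - {a})" "card (S - {a}) = j" "S - {a} \<subseteq> I"
        using S fin_subset[of S] by auto
      then show ?thesis by blast
    qed (use S in auto)
  next
    fix S assume "S \<in> {S. S \<subseteq> I \<and> card S = Suc j} \<union> insert a ` {S. S \<subseteq> I \<and> card S = j}"
    then show "S \<in> {S. S \<subseteq> insert a I \<and> card S = Suc j}"
    proof
      assume "S \<in> insert a ` {S. S \<subseteq> I \<and> card S = j}"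
      then obtain T where T: "T \<subseteq> I" "card T = j" "S = insert a T" by auto
      then have "finite T" "a \<notin> T" using fin a by (auto intro: finite_subset)
      then show ?thesis using T by auto
    qed auto
  qed
  have fin_sets: "finite {S. S \<subseteq> I \<and> card S = i}" for i
    using fin by (auto intro: finite_subset[of _ "Pow I"])
  have inj: "inj_on (insert a) {S. S \<subseteq> I \<and> card S = j}"
    unfolding inj_on_def using a by (metis insert_ident mem_Collect_eq subsetD)
  have "esym_set (Suc j) (insert a I) f =
      esym_set (Suc j) I f + (\<Sum>T\<in>{S. S \<subseteq> I \<and> card S = j}. \<Prod>i\<in>insert a T. f i)"
    unfolding esym_set_def eq using a fin_sets
    by (subst sum.union_disjoint) (auto simp: sum.reindex[OF inj])
  also have "(\<Sum>T\<in>{S. S \<subseteq> I \<and> card S = j}. \<Prod>i\<in>insert a T. f i) = f a * esym_set j I f"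
    unfolding esym_set_def sum_distrib_left
  proof (rule sum.cong)
    fix T assume "T \<in> {S. S \<subseteq> I \<and> card S = j}"
    then have "finite T" "a \<notin> T" using fin a by (auto intro: finite_subset)
    then show "(\<Prod>i\<in>insert a T. f i) = f a * (\<Prod>i\<in>T. f i)" by simp
  qed simp
  finally show ?thesis .
qed

lemma esym_0: "esym 0 xs = 1"
proof -
  have "{S. S \<subseteq> {..<length xs} \<and> card S = 0} = {{}}" by (auto dest: finite_subset)
  then show ?thesis unfolding esym_eq_esym_set esym_set_def by simp
qed

lemma esym_Nil: "esym (Suc j) [] = 0"
  unfolding esym_eq_esym_set esym_set_def by simp

lemma esym_Cons: "esym (Suc j) (x # xs) = esym (Suc j) xs + x * esym j xs"
proof -
  have "{..<length (x # xs)} = insert 0 (Suc ` {..<length xs})"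
    by (simp add: lessThan_Suc_eq_insert_0)
  then have "esym (Suc j) (x # xs) = esym_set (Suc j) (insert 0 (Suc ` {..<length xs})) (\<lambda>i. (x # xs) ! i)"
    unfolding esym_eq_esym_set by simp
  also have "\<dots> = esym_set (Suc j) (Suc ` {..<length xs}) (\<lambda>i. (x # xs) ! i) +
      x * esym_set j (Suc ` {..<length xs}) (\<lambda>i. (x # xs) ! i)"
    by (subst esym_set_insert) auto
  also have "\<dots> = esym (Suc j) xs + x * esym j xs"
    unfolding esym_eq_esym_set by (simp add: esym_set_reindex comp_def)
  finally show ?thesis .
qed

lemma esym_mset_eq:
  assumes "mset xs = mset ys" shows "esym j xs = esym j ys"
proof -
  obtain p where p: "p permutes {..<length ys}" "permute_list p ys = xs"
    using mset_eq_permutation[OF assms] by blast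
  have len: "length xs = length ys" using assms by (metis size_mset)
  have "esym j xs = esym_set j {..<length ys} ((\<lambda>i. ys ! i) \<circ> p)"
    unfolding esym_eq_esym_set len using p by (intro esym_set_cong) (auto simp: permute_list_nth)
  also have "\<dots> = esym_set j (p ` {..<length ys}) (\<lambda>i. ys ! i)"
    using p(1) by (simp add: esym_set_reindex permutes_inj_on)
  also have "\<dots> = esym j ys" unfolding esym_eq_esym_set using p(1) by (simp add: permutes_image)
  finally show ?thesis .
qed

fun esym_poly :: "nat \<Rightarrow> real list \<Rightarrow> real poly" where
  "esym_poly 0 xs = 1"
| "esym_poly (Suc l) [] = 0"
| "esym_poly (Suc l) (x # xs) = esym_poly (Suc l) xs + [:x,1:] * esym_poly l xs"

lemma poly_esym_poly: "poly (esym_poly l xs) t = esym l (map (\<lambda>x. x + t) xs)"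
  by (induction l xs rule: esym_poly.induct) (auto simp: esym_0 esym_Nil esym_Cons algebra_simps)

lemma esym_poly_mset_eq: "mset xs = mset ys \<Longrightarrow> esym_poly l xs = esym_poly l ys"
  by (intro poly_eq_poly_eq_iff[THEN iffD1] ext) (simp add: poly_esym_poly esym_mset_eq)

lemma esym_poly_eq_0: "length xs < l \<Longrightarrow> esym_poly l xs = 0"
proof (induction l xs rule: esym_poly.induct)
  case (3 l x xs)
  then show ?case by (cases l) auto
qed auto

lemma esym_poly_length: "esym_poly (length xs) xs = (\<Prod>a\<in>#mset (map uminus xs). [:-a,1:])"
  by (induction xs) (simp_all add: esym_poly_eq_0)

lemma degree_coeff_esym_poly:
  "degree (esym_poly l xs) \<le> l \<and> coeff (esym_poly l xs) l = of_nat (length xs choose l)"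
proof (induction l xs rule: esym_poly.induct)
  case (3 l x xs)
  have "degree ([:x,1:] * esym_poly l xs) \<le> Suc l"
    using 3 degree_mult_le[of "[:x,1:]" "esym_poly l xs"] by simp
  then have "degree (esym_poly (Suc l) (x # xs)) \<le> Suc l" using 3 by (simp add: degree_add_le)
  moreover have "coeff ([:x,1:] * esym_poly l xs) (Suc l) = coeff (esym_poly l xs) l"
    using 3 by (simp add: coeff_eq_0 mult_pCons_left)
  ultimately show ?case using 3 by simp
qed simp_all

lemma degree_esym_poly: "l \<le> length xs \<Longrightarrow> degree (esym_poly l xs) = l"
  using degree_coeff_esym_poly[of l xs]
  by (metis binomial_eq_0_iff le_degree linorder_not_le of_nat_eq_0_iff order_antisym)

lemma lead_coeff_esym_poly_pos: "l \<le> length xs \<Longrightarrow> lead_coeff (esym_poly l xs) > 0"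
  using degree_coeff_esym_poly[of l xs] degree_esym_poly[of l xs] by simp

lemma pderiv_esym_poly:
  "pderiv (esym_poly (Suc l) xs) = Polynomial.smult (of_nat (length xs - l)) (esym_poly l xs)"
proof (induction xs arbitrary: l)
  case (Cons x xs)
  have "pderiv (esym_poly (Suc l) (x # xs)) =
      pderiv (esym_poly (Suc l) xs) + esym_poly l xs + [:x,1:] * pderiv (esym_poly l xs)"
    by (simp add: pderiv_add pderiv_mult pderiv_pCons)
  also have "\<dots> = Polynomial.smult (of_nat (length xs - l)) (esym_poly l xs) + esym_poly l xs +
      [:x,1:] * pderiv (esym_poly l xs)"
    using Cons by simp
  also have "\<dots> = Polynomial.smult (of_nat (length (x # xs) - l)) (esym_poly l (x # xs))"
  proof (cases l)
    case 0 then show ?thesis by (simp add: one_pCons)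
  next
    case (Suc l')
    have IH: "pderiv (esym_poly l xs) = Polynomial.smult (of_nat (length xs - l')) (esym_poly l' xs)"
      using Cons Suc by simp
    show ?thesis
    proof (cases "l \<le> length xs")
      case True
      then have "real (length xs - l) + 1 = real (length xs - l')" "length (x # xs) - l = length xs - l'"
        using Suc by (simp_all add: of_nat_diff)
      moreover have "Polynomial.smult c A + A + P * Polynomial.smult (c + 1) B =
          Polynomial.smult (c + 1) (A + P * B)" for c :: real and A P B :: "real poly"
        by (simp add: algebra_simps smult_add_left smult_add_right)
      ultimately show ?thesis using Suc IH by (metis esym_poly.simps(3))
    next
      case False
      then show ?thesis using Suc IH by (simp add: esym_poly_eq_0)
    qed
  qed
  finally show ?case .
qed simp

text \<open>Up to a positive factor, \<open>esym_poly l xs\<close> is the derivative of \<open>esym_poly (l + 1) xs\<close>; hence all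
  of them descend by Rolle's theorem from the real-rooted \<open>esym_poly (length xs) xs\<close>.\<close>

lemma interlaces_esym_poly_of_real_rooted:
  assumes "real_rooted (esym_poly (Suc l) xs)" "Suc l \<le> length xs"
  shows "interlaces (esym_poly (Suc l) xs) (esym_poly l xs)"
proof -
  define c :: real where "c = of_nat (length xs - l)"
  have "c \<noteq> 0" using assms(2) by (simp add: c_def)
  have "interlaces (esym_poly (Suc l) xs) (pderiv (esym_poly (Suc l) xs))"
    using assms by (intro pderiv_interlaces) (simp_all add: degree_esym_poly)
  then have "interlaces (esym_poly (Suc l) xs) (Polynomial.smult c (esym_poly l xs))"
    by (simp add: pderiv_esym_poly c_def)
  then show ?thesis
    using interlaces_smult_right[of _ "Polynomial.smult c (esym_poly l xs)" "inverse c"] \<open>c \<noteq> 0\<close>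
    by simp
qed

lemma real_rooted_esym_poly: "l \<le> length xs \<Longrightarrow> real_rooted (esym_poly l xs)"
proof (induction rule: inc_induct)
  case base
  show ?case unfolding esym_poly_length by (rule real_rooted_prod_mset_linear)
next
  case (step l)
  then show ?case using interlaces_esym_poly_of_real_rooted[of l xs] by (simp add: interlaces_def)
qed

lemma interlaces_esym_poly: "Suc l \<le> length xs \<Longrightarrow> interlaces (esym_poly (Suc l) xs) (esym_poly l xs)"
  by (simp add: interlaces_esym_poly_of_real_rooted real_rooted_esym_poly)

lemma esym_poly_roots_bounds:
  assumes "l \<le> length xs" "z \<in># proots (esym_poly l xs)"
  shows "Min (uminus ` set xs) \<le> z \<and> z \<le> Max (uminus ` set xs)"
  using assms
proof (induction arbitrary: z rule: inc_induct)
  case base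
  then have "z \<in> uminus ` set xs" by (simp add: esym_poly_length proots_prod_mset_linear)
  then show ?case by (simp add: Min_le Max_ge del: image_iff)
next
  case (step l)
  have "interlaces (esym_poly (Suc l) xs) (esym_poly l xs)"
    using step.hyps by (intro interlaces_esym_poly) simp
  moreover have "\<forall>z\<in>#proots (esym_poly (Suc l) xs). Min (uminus ` set xs) \<le> z \<and> z \<le> Max (uminus ` set xs)"
    using step.IH by blast
  ultimately show ?case using interlaces_roots_bounds step.prems by blast
qed

definition remove_nth :: "nat \<Rightarrow> 'a list \<Rightarrow> 'a list" where
  "remove_nth j xs = take j xs @ drop (Suc j) xs"

lemma mset_remove_nth: "j < length xs \<Longrightarrow> mset xs = mset (xs ! j # remove_nth j xs)"
  unfolding remove_nth_def by (subst id_take_nth_drop[of j xs]) auto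

lemma length_remove_nth: "j < length xs \<Longrightarrow> length (remove_nth j xs) = length xs - 1"
  unfolding remove_nth_def by simp

lemma remove_nth_map: "remove_nth j (map f xs) = map f (remove_nth j xs)"
  unfolding remove_nth_def by (simp add: take_map drop_map)

lemma esym_poly_remove_nth:
  "j < length xs \<Longrightarrow>
    esym_poly (Suc l) xs = esym_poly (Suc l) (remove_nth j xs) + [:xs ! j, 1:] * esym_poly l (remove_nth j xs)"
  using esym_poly_mset_eq[OF mset_remove_nth[of j xs], of "Suc l"] by simp

lemma interlaces_esym_poly_remove_nth:
  assumes j: "j < length xs" and l: "Suc l \<le> length xs"
  shows "interlaces (esym_poly (Suc l) xs) (esym_poly l (remove_nth j xs))"
proof -
  define ys where "ys = remove_nth j xs"
  have len: "l \<le> length ys" using j l by (simp add: ys_def length_remove_nth)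
  have "interlacing_cone (esym_poly l ys) (esym_poly (Suc l) ys)"
  proof (cases "Suc l \<le> length ys")
    case True
    then show ?thesis by (intro interlaces_in_cone interlaces_esym_poly lead_coeff_esym_poly_pos)
  next
    case False
    then show ?thesis by (simp add: esym_poly_eq_0 interlacing_cone_zero)
  qed
  moreover have "interlacing_cone (esym_poly l ys) ([:xs ! j, 1:] * esym_poly l ys)"
    using lead_coeff_esym_poly_pos[OF len] by (intro interlacing_cone_linear_mult_self) auto
  ultimately have "interlacing_cone (esym_poly l ys) (esym_poly (Suc l) xs)"
    unfolding esym_poly_remove_nth[OF j, of l] ys_def by (rule interlacing_cone_add)
  then show ?thesis unfolding ys_def[symmetric]
    using l len lead_coeff_esym_poly_pos[OF l] by (intro interlaces_of_cone real_rooted_esym_poly)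
      (simp_all add: degree_esym_poly)
qed

lemma interlaces_esym_poly_perturbation:
  fixes rs :: "real list" and w :: "nat \<Rightarrow> real" and r00 :: real
  assumes k: "1 \<le> k" "k \<le> length rs" and w: "\<And>j. j < length rs \<Longrightarrow> w j \<ge> 0"
  defines "P \<equiv> [:r00,1:] * esym_poly k rs -
      (\<Sum>j<length rs. Polynomial.smult (w j) (esym_poly (k - 1) (remove_nth j rs)))"
  shows "interlaces P (esym_poly k rs)" "lead_coeff P > 0"
proof -
  define \<sigma> where "\<sigma> = esym_poly k rs"
  define S where "S = (\<Sum>j<length rs. Polynomial.smult (w j) (- esym_poly (k - 1) (remove_nth j rs)))"
  have deg_\<sigma>: "degree \<sigma> = k" and lc_\<sigma>: "lead_coeff \<sigma> > 0"
    unfolding \<sigma>_def using k degree_esym_poly lead_coeff_esym_poly_pos by blast+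
  have \<sigma>0: "\<sigma> \<noteq> 0" using lc_\<sigma> by auto
  have I: "interlaces \<sigma> (esym_poly (k - 1) (remove_nth j rs))" if "j < length rs" for j
    using interlaces_esym_poly_remove_nth[OF that, of "k - 1"] k by (simp add: \<sigma>_def)
  have lc: "lead_coeff (esym_poly (k - 1) (remove_nth j rs)) > 0" if "j < length rs" for j
    using that k by (intro lead_coeff_esym_poly_pos) (simp add: length_remove_nth)
  have P: "P = [:r00,1:] * \<sigma> + S"
    unfolding P_def S_def \<sigma>_def by (simp add: sum_negf[symmetric] smult_minus_right)
  have "interlacing_cone \<sigma> S"
    unfolding S_def
  proof (rule interlacing_cone_sum)
    fix j assume "j \<in> {..<length rs}"
    then have j: "j < length rs" by simp
    show "interlacing_cone \<sigma> (Polynomial.smult (w j) (- esym_poly (k - 1) (remove_nth j rs)))"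
      using interlaced_neg_in_cone[OF I[OF j] lc[OF j]] w[OF j] by (rule interlacing_cone_smult)
  qed
  then have cone: "interlacing_cone \<sigma> P"
    unfolding P by (rule interlacing_cone_add[OF interlacing_cone_linear_mult_self[OF \<sigma>0]])
  have "degree (Polynomial.smult (w j) (- esym_poly (k - 1) (remove_nth j rs))) \<le> k - 1"
    if "j < length rs" for j
  proof -
    have "degree (esym_poly (k - 1) (remove_nth j rs)) = k - 1"
      using that k by (intro degree_esym_poly) (simp add: length_remove_nth)
    then show ?thesis using degree_smult_le[of "w j" "- esym_poly (k - 1) (remove_nth j rs)"] by simp
  qed
  then have "degree S \<le> k - 1" unfolding S_def by (intro degree_sum_le) auto
  moreover have deg_A: "degree ([:r00,1:] * \<sigma>) = Suc k" using deg_\<sigma> \<sigma>0 by (simp add: degree_mult_eq)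
  ultimately have less: "degree S < degree ([:r00,1:] * \<sigma>)" by simp
  then have deg_P: "degree P = Suc (degree \<sigma>)"
    unfolding P using deg_A deg_\<sigma> by (simp add: degree_add_eq_left)
  have lc_P: "lead_coeff P = lead_coeff \<sigma>"
    unfolding P using lead_coeff_add_le[OF less] by (simp add: add.commute lead_coeff_mult)
  show "lead_coeff P > 0" using lc_P lc_\<sigma> by simp
  show "interlaces P (esym_poly k rs)"
    using interlaces_of_cone[OF _ cone deg_P] k lc_P lc_\<sigma>
    by (simp add: \<sigma>_def real_rooted_esym_poly)
qed

section \<open>Orthogonal diagonalisation of real symmetric matrices\<close>

definition mat_diag_list :: "real list \<Rightarrow> real mat" where
  "mat_diag_list es = mat_diag (length es) (\<lambda>i. es ! i)"

lemma mat_diag_list_carrier [simp]: "mat_diag_list es \<in> carrier_mat (length es) (length es)"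
  by (simp add: mat_diag_list_def)

lemma prod_list_linear_eq_prod_mset: "(\<Prod>e\<leftarrow>es. [:-e,1::real:]) = (\<Prod>a\<in>#mset es. [:-a,1:])"
  by (metis mset_map prod_mset_prod_list)

definition orthonormal_mat :: "nat \<Rightarrow> real mat \<Rightarrow> bool" where
  "orthonormal_mat n W \<longleftrightarrow> W \<in> carrier_mat n n \<and> transpose_mat W * W = 1\<^sub>m n"

lemma orthonormal_matD:
  assumes "orthonormal_mat n W"
  shows "W \<in> carrier_mat n n" "transpose_mat W \<in> carrier_mat n n"
    "transpose_mat W * W = 1\<^sub>m n" "W * transpose_mat W = 1\<^sub>m n"
  using assms mat_mult_left_right_inverse[of "transpose_mat W" n W] by (auto simp: orthonormal_mat_def)

lemma orthonormal_mat_one: "orthonormal_mat n (1\<^sub>m n)"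
  by (simp add: orthonormal_mat_def)

lemma orthonormal_mat_mult:
  assumes V: "orthonormal_mat n V" and W: "orthonormal_mat n W"
  shows "orthonormal_mat n (V * W)"
proof -
  note V = orthonormal_matD[OF V] and W = orthonormal_matD[OF W]
  have "transpose_mat (V * W) * (V * W) = transpose_mat W * ((transpose_mat V * V) * W)"
    using V(1,2) W(1,2) by (simp add: transpose_mult assoc_mult_mat[of _ n n _ n _ n])
  also have "\<dots> = 1\<^sub>m n" using V W by simp
  finally show ?thesis using V W unfolding orthonormal_mat_def by simp
qed

lemma orthonormal_mat_similar:
  assumes W: "orthonormal_mat n W" and A: "A \<in> carrier_mat n n"
  shows "similar_mat_wit A (transpose_mat W * A * W) W (transpose_mat W)"
proof -
  note W = orthonormal_matD[OF W]
  have "W * (transpose_mat W * A * W) * transpose_mat W = (W * transpose_mat W) * A * (W * transpose_mat W)"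
    using W(1,2) A by (simp add: assoc_mult_mat[of _ n n _ n _ n])
  then have "A = W * (transpose_mat W * A * W) * transpose_mat W" using W A by simp
  then show ?thesis using W A by (intro similar_mat_witI[of _ _ n]) auto
qed

lemma orthonormal_mat_conj_assoc:
  assumes "orthonormal_mat n V" "orthonormal_mat n W" "A \<in> carrier_mat n n"
  shows "transpose_mat (V * W) * A * (V * W) = transpose_mat W * (transpose_mat V * A * V) * W"
  using orthonormal_matD[OF assms(1)] orthonormal_matD[OF assms(2)] assms(3)
  by (simp add: transpose_mult assoc_mult_mat[of _ n n _ n _ n])

lemma transpose_mult_entry:
  assumes "W \<in> carrier_mat n n" "A \<in> carrier_mat n n" "i < n" "j < n"
  shows "(transpose_mat W * A * W) $$ (i, j) = col W i \<bullet> (A *\<^sub>v col W j)"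
  using assms by (simp add: assoc_mult_mat[of _ n n A n W n] mult_mat_vec_def)

lemma orthonormal_mat_col_inner:
  assumes "orthonormal_mat n W" "i < n" "j < n"
  shows "col W i \<bullet> col W j = (if i = j then 1 else 0)"
  using transpose_mult_entry[of W n "1\<^sub>m n" i j] orthonormal_matD[OF assms(1)] assms(2,3) by simp

lemma conjugate_real_vec [simp]: "conjugate (v :: real vec) = v"
  by (rule eq_vecI) (auto simp: conjugate_vec_def conjugate_real_def)

text \<open>Gram--Schmidt applied to a basis completion of a unit vector \<open>u\<close>.\<close>

lemma orthonormal_mat_first_col:
  fixes u :: "real vec"
  assumes u: "u \<in> carrier_vec n" and uu: "u \<bullet> u = 1"
  shows "\<exists>W. orthonormal_mat n W \<and> col W 0 = u"
proof -
  interpret cof_vec_space n "TYPE(real)" .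
  have u0: "u \<noteq> 0\<^sub>v n" using uu u by auto
  define b where "b = basis_completion u"
  from basis_completion[OF u u0, folded b_def]
  have b: "set b \<subseteq> carrier_vec n" and dist_b: "distinct b"
    and indep: "\<not> lin_dep (set b)" and hdb: "hd b = u" and len_b: "length b = n" by auto
  have n0: "n > 0" using u0 u by (cases n) auto
  from hdb len_b n0 obtain vs where bv: "b = u # vs" by (cases b) auto
  define ws where "ws = gram_schmidt n b"
  from gram_schmidt_result[OF b dist_b indep refl, folded ws_def]
  have ws: "set ws \<subseteq> carrier_vec n" "corthogonal ws" "length ws = n" by (auto simp: len_b)
  have hd_ws: "hd ws = u" unfolding ws_def bv using u by simp
  have orth: "ws ! i \<bullet> ws ! j = 0 \<longleftrightarrow> i \<noteq> j" if "i < n" "j < n" for i j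
    using ws that unfolding corthogonal_def by (auto simp: scalar_prod_def)
  have pos: "ws ! i \<bullet> ws ! i > 0" if "i < n" for i
  proof -
    have "ws ! i \<in> carrier_vec n" using ws that by auto
    then have "ws ! i \<bullet> ws ! i \<ge> 0" by (simp add: scalar_prod_def sum_nonneg)
    then show ?thesis using orth[OF that that] by simp
  qed
  define us where "us = map (\<lambda>w. (1 / sqrt (w \<bullet> w)) \<cdot>\<^sub>v w) ws"
  have us: "set us \<subseteq> carrier_vec n" "length us = n" unfolding us_def using ws by auto
  have orthonormal: "us ! i \<bullet> us ! j = (if i = j then 1 else 0)" if "i < n" "j < n" for i j
  proof -
    have "ws ! i \<in> carrier_vec n" "ws ! j \<in> carrier_vec n" using ws that by auto
    then have "us ! i \<bullet> us ! j = 1 / sqrt (ws ! i \<bullet> ws ! i) * (1 / sqrt (ws ! j \<bullet> ws ! j)) * (ws ! i \<bullet> ws ! j)"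
      unfolding us_def using that ws by simp
    then show ?thesis using orth[OF that] pos[OF that(1)] pos[OF that(2)]
      by (auto simp flip: real_sqrt_mult)
  qed
  define W where "W = mat_of_cols n us"
  have W: "W \<in> carrier_mat n n" unfolding W_def using mat_of_cols_carrier(1)[of n us] us by simp
  have col_W: "col W i = us ! i" if "i < n" for i
    unfolding W_def using that us nth_mem[of i us] by (intro col_mat_of_cols) auto
  have "transpose_mat W * W = 1\<^sub>m n"
    by (rule eq_matI) (use W col_W orthonormal in auto)
  moreover have "col W 0 = u"
    using col_W[OF n0] hd_ws ws(3) n0 uu unfolding us_def by (cases ws) auto
  ultimately show ?thesis using W unfolding orthonormal_mat_def by blast
qed

text \<open>One step of the spectral theorem: conjugating by an orthonormal matrix whose first column is a
  unit eigenvector splits off that eigenvalue.\<close>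

lemma symmetric_mat_deflation:
  fixes A :: "real mat"
  assumes A: "A \<in> carrier_mat (Suc m) (Suc m)" and sym: "transpose_mat A = A"
    and ev: "poly (char_poly A) e = 0"
  obtains W A3 where "orthonormal_mat (Suc m) W" "A3 \<in> carrier_mat m m" "transpose_mat A3 = A3"
    "transpose_mat W * A * W = four_block_mat (mat 1 1 (\<lambda>_. e)) (0\<^sub>m 1 m) (0\<^sub>m m 1) A3"
    "char_poly A = [:-e,1:] * char_poly A3"
proof -
  define n where "n = Suc m"
  have "eigenvalue A e" using eigenvalue_root_char_poly[OF A] ev by simp
  then have "eigenvector A (find_eigenvector A e) e" using find_eigenvector[OF A] by simp
  moreover define v where "v = find_eigenvector A e"
  ultimately have v: "v \<in> carrier_vec n" "v \<noteq> 0\<^sub>v n" "A *\<^sub>v v = e \<cdot>\<^sub>v v"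
    using A unfolding eigenvector_def n_def by auto
  have vv: "v \<bullet> v > 0" using conjugate_square_greater_0_vec[OF v(1)] v(2) by simp
  define u where "u = (1 / sqrt (v \<bullet> v)) \<cdot>\<^sub>v v"
  have u: "u \<in> carrier_vec n" "u \<bullet> u = 1" "A *\<^sub>v u = e \<cdot>\<^sub>v u"
    unfolding u_def using v vv A
    by (auto simp: mult_mat_vec[of _ n n] smult_smult_assoc mult.commute n_def simp flip: real_sqrt_mult)
  obtain W where W: "orthonormal_mat n W" and col0: "col W 0 = u"
    using orthonormal_mat_first_col[OF u(1,2)] by blast
  note Wc = orthonormal_matD[OF W]
  define A' where "A' = transpose_mat W * A * W"
  have A': "A' \<in> carrier_mat n n" unfolding A'_def using Wc A n_def by auto
  have entry: "A' $$ (i, j) = col W i \<bullet> (A *\<^sub>v col W j)" if "i < n" "j < n" for i j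
    unfolding A'_def using transpose_mult_entry[OF Wc(1) _ that] A n_def by simp
  have symmetric: "A' $$ (i, j) = A' $$ (j, i)" if "i < n" "j < n" for i j
  proof -
    have c: "col W i \<in> carrier_vec n" "col W j \<in> carrier_vec n" using Wc that by auto
    have "col W i \<bullet> (A *\<^sub>v col W j) = (transpose_mat A *\<^sub>v col W i) \<bullet> col W j"
      using transpose_vec_mult_scalar[of A n n "col W j" "col W i"] A c n_def by simp
    also have "\<dots> = col W j \<bullet> (A *\<^sub>v col W i)"
      unfolding sym using comm_scalar_prod[of "A *\<^sub>v col W i" n "col W j"] A c n_def by simp
    finally show ?thesis using entry that by simp
  qed
  have first_col: "A' $$ (i, 0) = (if i = 0 then e else 0)" if "i < n" for i
  proof -
    have "A' $$ (i, 0) = col W i \<bullet> (e \<cdot>\<^sub>v col W 0)" using entry[OF that] col0 u(3) by (simp add: n_def)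
    also have "\<dots> = e * (col W i \<bullet> col W 0)" using Wc(1) that by simp
    finally show ?thesis using orthonormal_mat_col_inner[OF W that, of 0] by (simp add: n_def)
  qed
  define A3 where "A3 = mat m m (\<lambda>(i, j). A' $$ (Suc i, Suc j))"
  define E1 :: "real mat" where "E1 = mat 1 1 (\<lambda>_. e)"
  have A3: "A3 \<in> carrier_mat m m" and E1: "E1 \<in> carrier_mat 1 1" by (simp_all add: A3_def E1_def)
  have blocks: "A' = four_block_mat E1 (0\<^sub>m 1 m) (0\<^sub>m m 1) A3"
  proof (rule eq_matI)
    fix i j assume "i < dim_row (four_block_mat E1 (0\<^sub>m 1 m) (0\<^sub>m m 1) A3)"
      "j < dim_col (four_block_mat E1 (0\<^sub>m 1 m) (0\<^sub>m m 1) A3)"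
    then have i: "i < n" and j: "j < n" using A3 E1 by (auto simp: n_def)
    show "A' $$ (i, j) = four_block_mat E1 (0\<^sub>m 1 m) (0\<^sub>m m 1) A3 $$ (i, j)"
      using first_col[OF i] first_col[OF j] symmetric[OF i j] i j A3 E1
      by (cases "i = 0"; cases "j = 0") (auto simp: E1_def A3_def n_def)
  qed (use A' A3 E1 n_def in auto)
  have "char_poly A = char_poly A'"
    using char_poly_similar orthonormal_mat_similar[OF W A[folded n_def]]
    unfolding A'_def similar_mat_def by blast
  also have "\<dots> = char_poly E1 * char_poly A3"
    unfolding blocks by (rule char_poly_four_block_zeros_col[OF E1 _ A3]) simp
  also have "char_poly E1 = [:-e,1:]"
    using char_poly_upper_triangular[OF E1] by (simp add: E1_def upper_triangular_def diag_mat_def)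
  finally have "char_poly A = [:-e,1:] * char_poly A3" .
  moreover have "transpose_mat A3 = A3"
    by (rule eq_matI) (use symmetric in \<open>auto simp: A3_def n_def\<close>)
  ultimately show thesis using that W A3 blocks unfolding A'_def E1_def n_def by blast
qed

lemma orthonormal_block_conj:
  assumes W: "orthonormal_mat m W" and E: "E \<in> carrier_mat 1 1" and D: "D \<in> carrier_mat m m"
  defines "B \<equiv> four_block_mat (1\<^sub>m 1) (0\<^sub>m 1 m) (0\<^sub>m m 1) W"
  shows "orthonormal_mat (Suc m) B"
    "transpose_mat B * four_block_mat E (0\<^sub>m 1 m) (0\<^sub>m m 1) D * B =
       four_block_mat E (0\<^sub>m 1 m) (0\<^sub>m m 1) (transpose_mat W * D * W)"
proof -
  note Wc = orthonormal_matD[OF W]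
  have BT: "transpose_mat B = four_block_mat (1\<^sub>m 1) (0\<^sub>m 1 m) (0\<^sub>m m 1) (transpose_mat W)"
    unfolding B_def using Wc by (subst transpose_four_block_mat) auto
  have "transpose_mat B * B = four_block_mat (1\<^sub>m 1) (0\<^sub>m 1 m) (0\<^sub>m m 1) (transpose_mat W) *
      four_block_mat (1\<^sub>m 1) (0\<^sub>m 1 m) (0\<^sub>m m 1) W"
    by (simp only: BT) (simp only: B_def)
  also have "\<dots> = four_block_mat (1\<^sub>m 1 * 1\<^sub>m 1 + 0\<^sub>m 1 m * 0\<^sub>m m 1) (1\<^sub>m 1 * 0\<^sub>m 1 m + 0\<^sub>m 1 m * W)
      (0\<^sub>m m 1 * 1\<^sub>m 1 + transpose_mat W * 0\<^sub>m m 1) (0\<^sub>m m 1 * 0\<^sub>m 1 m + transpose_mat W * W)"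
    by (rule mult_four_block_mat) (use Wc in auto)
  also have "\<dots> = 1\<^sub>m (Suc m)" using Wc by simp
  finally show "orthonormal_mat (Suc m) B"
    unfolding orthonormal_mat_def B_def using Wc by auto
  have "transpose_mat B * four_block_mat E (0\<^sub>m 1 m) (0\<^sub>m m 1) D =
      four_block_mat (1\<^sub>m 1) (0\<^sub>m 1 m) (0\<^sub>m m 1) (transpose_mat W) * four_block_mat E (0\<^sub>m 1 m) (0\<^sub>m m 1) D"
    by (simp only: BT)
  also have "\<dots> = four_block_mat (1\<^sub>m 1 * E + 0\<^sub>m 1 m * 0\<^sub>m m 1) (1\<^sub>m 1 * 0\<^sub>m 1 m + 0\<^sub>m 1 m * D)
      (0\<^sub>m m 1 * E + transpose_mat W * 0\<^sub>m m 1) (0\<^sub>m m 1 * 0\<^sub>m 1 m + transpose_mat W * D)"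
    by (rule mult_four_block_mat) (use Wc E D in auto)
  also have "\<dots> = four_block_mat E (0\<^sub>m 1 m) (0\<^sub>m m 1) (transpose_mat W * D)"
    using Wc E D by simp
  also have "\<dots> * B = four_block_mat (E * 1\<^sub>m 1 + 0\<^sub>m 1 m * 0\<^sub>m m 1) (E * 0\<^sub>m 1 m + 0\<^sub>m 1 m * W)
      (0\<^sub>m m 1 * 1\<^sub>m 1 + (transpose_mat W * D) * 0\<^sub>m m 1) (0\<^sub>m m 1 * 0\<^sub>m 1 m + (transpose_mat W * D) * W)"
    unfolding B_def by (rule mult_four_block_mat) (use Wc E D in auto)
  also have "\<dots> = four_block_mat E (0\<^sub>m 1 m) (0\<^sub>m m 1) (transpose_mat W * D * W)"
    using Wc E D by (simp add: mult_carrier_mat[of _ m m D m])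
  finally show "transpose_mat B * four_block_mat E (0\<^sub>m 1 m) (0\<^sub>m m 1) D * B =
      four_block_mat E (0\<^sub>m 1 m) (0\<^sub>m m 1) (transpose_mat W * D * W)" .
qed

lemma symmetric_mat_orthonormal_diagonalization:
  fixes A :: "real mat"
  assumes "A \<in> carrier_mat n n" "transpose_mat A = A" "char_poly A = (\<Prod>e\<leftarrow>es. [:-e,1:])"
  shows "\<exists>W. orthonormal_mat n W \<and> transpose_mat W * A * W = mat_diag_list es"
  using assms
proof (induction es arbitrary: n A)
  case Nil
  then have "n = 0" using degree_monic_char_poly[of A n] by simp
  then show ?case using Nil.prems orthonormal_mat_one[of 0]
    by (intro exI[of _ "1\<^sub>m 0"]) (auto intro!: eq_matI simp: mat_diag_list_def mat_diag_def)
next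
  case (Cons e es n A)
  have "degree (char_poly A) = Suc (length es)"
    unfolding Cons.prems(3) prod_list_linear_eq_prod_mset degree_prod_mset_linear by simp
  then have n: "n = Suc (length es)" using degree_monic_char_poly[OF Cons.prems(1)] by simp
  obtain W1 A3 where W1: "orthonormal_mat n W1" and A3: "A3 \<in> carrier_mat (length es) (length es)"
    "transpose_mat A3 = A3"
    and A': "transpose_mat W1 * A * W1 = four_block_mat (mat 1 1 (\<lambda>_. e)) (0\<^sub>m 1 (length es)) (0\<^sub>m (length es) 1) A3"
    and cp: "char_poly A = [:-e,1:] * char_poly A3"
  proof (rule symmetric_mat_deflation)
    show "A \<in> carrier_mat (Suc (length es)) (Suc (length es))" using Cons.prems(1) n by simp
    show "poly (char_poly A) e = 0" using Cons.prems(3) by simp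
  qed (use Cons.prems(2) n in auto)
  have "char_poly A3 = (\<Prod>e\<leftarrow>es. [:-e,1:])"
    using cp Cons.prems(3) by simp
  then obtain W2 where W2: "orthonormal_mat (length es) W2" and D: "transpose_mat W2 * A3 * W2 = mat_diag_list es"
    using Cons.IH A3 by blast
  define B where "B = four_block_mat (1\<^sub>m 1) (0\<^sub>m 1 (length es)) (0\<^sub>m (length es) 1) W2"
  note B = orthonormal_block_conj[OF W2 mat_carrier[of 1 1 "\<lambda>_. e"] A3(1), folded B_def]
  have "orthonormal_mat n (W1 * B)" using orthonormal_mat_mult[OF W1] B n by simp
  have "transpose_mat (W1 * B) * A * (W1 * B) = transpose_mat B * (transpose_mat W1 * A * W1) * B"
    using orthonormal_mat_conj_assoc[OF W1 _ Cons.prems(1), of B] B n by simp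
  also have "\<dots> = four_block_mat (mat 1 1 (\<lambda>_. e)) (0\<^sub>m 1 (length es)) (0\<^sub>m (length es) 1)
      (mat_diag_list es)"
    unfolding A' B(2) D ..
  also have "\<dots> = mat_diag_list (e # es)"
    by (rule eq_matI) (auto simp: mat_diag_list_def mat_diag_def nth_Cons')
  finally show ?case using \<open>orthonormal_mat n (W1 * B)\<close> by blast
qed

section \<open>The Newton transformation in an eigenbasis\<close>

lemma mset_eigvals:
  assumes "char_poly s = (\<Prod>e\<leftarrow>es. [:-e,1:])"
  shows "mset (eigvals s) = mset es"
proof -
  have "char_poly s = (\<Prod>e\<leftarrow>eigvals s. [:-e,1:])"
    unfolding eigvals_def using assms by (rule someI)
  then show ?thesis
    using assms proots_prod_mset_linear by (metis prod_list_linear_eq_prod_mset)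
qed

lemma sigma_eq_esym: "char_poly s = (\<Prod>e\<leftarrow>es. [:-e,1:]) \<Longrightarrow> sigma j s = esym j es"
  unfolding sigma_def by (rule esym_mset_eq) (rule mset_eigvals)

text \<open>The eigenvalue \<open>\<mu>\<^sub>j\<close> of \<open>s\<close> cancels in the \<open>j\<close>-th eigenvalue of \<open>T\<^sub>m(s)\<close>, which is therefore
  \<open>\<sigma>\<^sub>m\<close> of the remaining eigenvalues.\<close>

lemma alternating_sum_esym_remove_nth:
  assumes j: "j < length \<mu>"
  shows "(\<Sum>i<Suc m. (-1) ^ i * esym (m - i) \<mu> * (\<mu> ! j) ^ i) = esym m (remove_nth j \<mu>)"
proof (induction m)
  case (Suc m)
  define x where "x = \<mu> ! j"
  have split: "esym (Suc l) \<mu> = esym (Suc l) (remove_nth j \<mu>) + x * esym l (remove_nth j \<mu>)" for l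
    using esym_mset_eq[OF mset_remove_nth[OF j], of "Suc l"] by (simp add: esym_Cons x_def)
  have "(\<Sum>i<Suc (Suc m). (-1) ^ i * esym (Suc m - i) \<mu> * x ^ i) =
      esym (Suc m) \<mu> + (\<Sum>i<Suc m. (-1) ^ Suc i * esym (Suc m - Suc i) \<mu> * x ^ Suc i)"
    by (subst sum.lessThan_Suc_shift) simp
  also have "(\<Sum>i<Suc m. (-1) ^ Suc i * esym (Suc m - Suc i) \<mu> * x ^ Suc i) =
      - x * (\<Sum>i<Suc m. (-1) ^ i * esym (m - i) \<mu> * x ^ i)"
    by (simp add: sum_distrib_left algebra_simps)
  also have "(\<Sum>i<Suc m. (-1) ^ i * esym (m - i) \<mu> * x ^ i) = esym m (remove_nth j \<mu>)"
    using Suc unfolding x_def .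
  finally show ?case using split[of m] unfolding x_def by simp
qed (simp add: esym_0)

lemma mat_diag_list_pow: "mat_diag_list d ^\<^sub>m i = mat_diag_list (map (\<lambda>x. x ^ i) d)"
proof (induction i)
  case (Suc i)
  have "mat_diag_list d ^\<^sub>m Suc i = mat_diag_list (map (\<lambda>x. x ^ i) d) * mat_diag_list d"
    using Suc by simp
  also have "\<dots> = mat_diag (length d) (\<lambda>j. map (\<lambda>x. x ^ i) d ! j * d ! j)"
    unfolding mat_diag_list_def by simp
  also have "\<dots> = mat_diag_list (map (\<lambda>x. x ^ Suc i) d)"
    unfolding mat_diag_list_def mat_diag_def by (rule eq_matI) auto
  finally show ?case .
qed (auto intro!: eq_matI simp: mat_diag_list_def mat_diag_def)

lemma foldr_mat_diag_list:
  "foldr (\<lambda>i acc. c i \<cdot>\<^sub>m mat_diag_list (map (\<lambda>x. x ^ i) d) + acc) L (0\<^sub>m (length d) (length d)) =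
   mat_diag_list (map (\<lambda>x. \<Sum>i\<leftarrow>L. c i * x ^ i) d)"
proof (induction L)
  case (Cons a L)
  show ?case unfolding foldr.simps comp_def Cons
    by (rule eq_matI) (auto simp: mat_diag_list_def mat_diag_def)
qed (auto intro!: eq_matI simp: mat_diag_list_def mat_diag_def)

lemma foldr_smult_pow_carrier:
  "s \<in> carrier_mat n n \<Longrightarrow> foldr (\<lambda>i acc. c i \<cdot>\<^sub>m (s ^\<^sub>m i) + acc) L (0\<^sub>m n n) \<in> carrier_mat n n"
  by (induction L) auto

lemma orthonormal_conj_pow:
  assumes W: "orthonormal_mat n W" and s: "s \<in> carrier_mat n n"
  shows "transpose_mat W * (s ^\<^sub>m i) * W = (transpose_mat W * s * W) ^\<^sub>m i"
proof -
  note Wc = orthonormal_matD[OF W]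
  define D where "D = transpose_mat W * s * W"
  have D: "D ^\<^sub>m i \<in> carrier_mat n n" unfolding D_def using Wc s by simp
  have "s ^\<^sub>m i = W * D ^\<^sub>m i * transpose_mat W"
    unfolding D_def using orthonormal_mat_similar[OF W s] by (rule similar_mat_wit_pow_id)
  then have "transpose_mat W * (s ^\<^sub>m i) * W = (transpose_mat W * W) * D ^\<^sub>m i * (transpose_mat W * W)"
    using Wc(1,2) D by (simp add: assoc_mult_mat[of _ n n _ n _ n])
  then show ?thesis using Wc D unfolding D_def by simp
qed

lemma orthonormal_conj_foldr:
  assumes W: "orthonormal_mat n W" and s: "s \<in> carrier_mat n n"
  shows "transpose_mat W * foldr (\<lambda>i acc. c i \<cdot>\<^sub>m (s ^\<^sub>m i) + acc) L (0\<^sub>m n n) * W =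
         foldr (\<lambda>i acc. c i \<cdot>\<^sub>m ((transpose_mat W * s * W) ^\<^sub>m i) + acc) L (0\<^sub>m n n)"
proof (induction L)
  case Nil
  show ?case using orthonormal_matD[OF W] by simp
next
  case (Cons a L)
  note Wc = orthonormal_matD[OF W]
  define F where "F = foldr (\<lambda>i acc. c i \<cdot>\<^sub>m (s ^\<^sub>m i) + acc) L (0\<^sub>m n n)"
  have F: "F \<in> carrier_mat n n" unfolding F_def using s by (rule foldr_smult_pow_carrier)
  have S: "c a \<cdot>\<^sub>m (s ^\<^sub>m a) \<in> carrier_mat n n" using s by simp
  have "transpose_mat W * (c a \<cdot>\<^sub>m (s ^\<^sub>m a) + F) * W =
      transpose_mat W * (c a \<cdot>\<^sub>m (s ^\<^sub>m a)) * W + transpose_mat W * F * W"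
    using Wc S F by (simp add: mult_add_distrib_mat[of _ n n] add_mult_distrib_mat[of _ n n _ W n])
  also have "transpose_mat W * (c a \<cdot>\<^sub>m (s ^\<^sub>m a)) * W = c a \<cdot>\<^sub>m (transpose_mat W * (s ^\<^sub>m a) * W)"
    using Wc s by (simp add: mult_smult_distrib[of _ n n _ n] mult_smult_assoc_mat[of _ n n _ n])
  finally show ?case using Cons orthonormal_conj_pow[OF W s] unfolding F_def by simp
qed

lemma orthonormal_quadratic_form:
  assumes W: "orthonormal_mat n W" and N: "N \<in> carrier_mat n n"
    and ND: "transpose_mat W * N * W = mat_diag_list b" and lb: "length b = n"
    and x: "x \<in> carrier_vec n"
  shows "x \<bullet> (N *\<^sub>v x) = (\<Sum>j<n. b ! j * (col W j \<bullet> x)\<^sup>2)"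
proof -
  note Wc = orthonormal_matD[OF W]
  have D: "mat_diag_list b \<in> carrier_mat n n" using mat_diag_list_carrier[of b] lb by simp
  have "N = W * mat_diag_list b * transpose_mat W"
    using orthonormal_mat_similar[OF W N] unfolding ND similar_mat_wit_def Let_def by simp
  moreover define y where "y = transpose_mat W *\<^sub>v x"
  ultimately have "N *\<^sub>v x = W *\<^sub>v (mat_diag_list b *\<^sub>v y)"
    using Wc D x by (simp add: assoc_mult_mat_vec[of _ n n _ n])
  then have "x \<bullet> (N *\<^sub>v x) = y \<bullet> (mat_diag_list b *\<^sub>v y)"
    using transpose_vec_mult_scalar[OF Wc(1) _ x, of "mat_diag_list b *\<^sub>v y"] D Wc x
    unfolding y_def by simp
  also have "\<dots> = (\<Sum>j<n. y $ j * (b ! j * y $ j))"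
  proof -
    have y: "y \<in> carrier_vec n" unfolding y_def using Wc x by simp
    have "(mat_diag_list b *\<^sub>v y) $ j = b ! j * y $ j" if "j < n" for j
    proof -
      have "(mat_diag_list b *\<^sub>v y) $ j = (\<Sum>l<n. (if j = l then b ! l else 0) * y $ l)"
        using that lb y by (simp add: mat_diag_list_def mat_diag_def scalar_prod_def row_def atLeast0LessThan)
      also have "\<dots> = (\<Sum>l<n. if l = j then b ! j * y $ j else 0)" by (rule sum.cong) auto
      finally show ?thesis using that by simp
    qed
    then show ?thesis using y D by (simp add: scalar_prod_def atLeast0LessThan)
  qed
  also have "\<dots> = (\<Sum>j<n. b ! j * (col W j \<bullet> x)\<^sup>2)"
    using Wc unfolding y_def by (intro sum.cong) (simp_all add: power2_eq_square)
  finally show ?thesis .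
qed

locale orthonormal_eigenbasis =
  fixes n :: nat and r W :: "real mat" and rs :: "real list"
  assumes W: "orthonormal_mat n W" and r: "r \<in> carrier_mat n n"
    and diag: "transpose_mat W * r * W = mat_diag_list rs" and length_rs: "length rs = n"
begin

lemma conj_shift: "transpose_mat W * (r + t \<cdot>\<^sub>m 1\<^sub>m n) * W = mat_diag_list (map (\<lambda>x. x + t) rs)"
proof -
  note Wc = orthonormal_matD[OF W]
  have "transpose_mat W * (r + t \<cdot>\<^sub>m 1\<^sub>m n) * W = transpose_mat W * r * W + t \<cdot>\<^sub>m (transpose_mat W * W)"
    using Wc r by (simp add: mult_add_distrib_mat[of _ n n] add_mult_distrib_mat[of _ n n _ W n]
        mult_smult_distrib[of _ n n _ n] mult_smult_assoc_mat[of _ n n _ n])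
  then show ?thesis using Wc unfolding diag
    by (auto intro!: eq_matI simp: mat_diag_list_def mat_diag_def length_rs)
qed

lemma char_poly_shift: "char_poly (r + t \<cdot>\<^sub>m 1\<^sub>m n) = (\<Prod>e\<leftarrow>map (\<lambda>x. x + t) rs. [:-e,1:])"
proof -
  define D where "D = mat_diag_list (map (\<lambda>x. x + t) rs)"
  have D: "D \<in> carrier_mat n n"
    unfolding D_def using mat_diag_list_carrier[of "map (\<lambda>x. x + t) rs"] length_rs by simp
  have "char_poly (r + t \<cdot>\<^sub>m 1\<^sub>m n) = char_poly D"
    using char_poly_similar orthonormal_mat_similar[OF W, of "r + t \<cdot>\<^sub>m 1\<^sub>m n"] r conj_shift
    unfolding similar_mat_def D_def by fastforce
  also have "\<dots> = (\<Prod>a\<leftarrow>diag_mat D. [:-a,1:])"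
    by (rule char_poly_upper_triangular[OF D]) (simp add: D_def upper_triangular_def mat_diag_list_def mat_diag_def)
  also have "diag_mat D = map (\<lambda>x. x + t) rs"
    unfolding D_def by (intro nth_equalityI) (simp_all add: diag_mat_def mat_diag_list_def mat_diag_def)
  finally show ?thesis .
qed

lemma sigma_shift: "sigma j (r + t \<cdot>\<^sub>m 1\<^sub>m n) = poly (esym_poly j rs) t"
  using sigma_eq_esym[OF char_poly_shift] by (simp add: poly_esym_poly)

lemma newton_T_quadratic_form:
  assumes x: "x \<in> carrier_vec n"
  shows "x \<bullet> (newton_T m (r + t \<cdot>\<^sub>m 1\<^sub>m n) *\<^sub>v x) =
    (\<Sum>j<n. (col W j \<bullet> x)\<^sup>2 * poly (esym_poly m (remove_nth j rs)) t)"
proof -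
  define s where "s = r + t \<cdot>\<^sub>m 1\<^sub>m n"
  define \<mu> where "\<mu> = map (\<lambda>x. x + t) rs"
  define c where "c i = (-1::real) ^ i * sigma (m - i) s" for i
  define b where "b = map (\<lambda>y. \<Sum>i\<leftarrow>[0..<Suc m]. c i * y ^ i) \<mu>"
  have s: "s \<in> carrier_mat n n" unfolding s_def using r by simp
  have N: "newton_T m s = foldr (\<lambda>i acc. c i \<cdot>\<^sub>m (s ^\<^sub>m i) + acc) [0..<Suc m] (0\<^sub>m n n)"
    unfolding newton_T_def c_def using s by simp
  have "transpose_mat W * newton_T m s * W =
      foldr (\<lambda>i acc. c i \<cdot>\<^sub>m (mat_diag_list \<mu> ^\<^sub>m i) + acc) [0..<Suc m] (0\<^sub>m (length \<mu>) (length \<mu>))"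
    unfolding N orthonormal_conj_foldr[OF W s] unfolding s_def conj_shift \<mu>_def using length_rs by simp
  also have "\<dots> = mat_diag_list b" unfolding mat_diag_list_pow foldr_mat_diag_list b_def ..
  moreover have "newton_T m s \<in> carrier_mat n n" unfolding N using s by (rule foldr_smult_pow_carrier)
  ultimately have "x \<bullet> (newton_T m s *\<^sub>v x) = (\<Sum>j<n. b ! j * (col W j \<bullet> x)\<^sup>2)"
    using orthonormal_quadratic_form[OF W _ _ _ x] length_rs by (simp add: b_def \<mu>_def)
  also have "\<dots> = (\<Sum>j<n. (col W j \<bullet> x)\<^sup>2 * poly (esym_poly m (remove_nth j rs)) t)"
  proof (rule sum.cong)
    fix j assume "j \<in> {..<n}"
    then have j: "j < length \<mu>" by (simp add: \<mu>_def length_rs)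
    have "sigma l s = esym l \<mu>" for l
      using sigma_shift[of l t] unfolding s_def \<mu>_def by (simp add: poly_esym_poly)
    then have "b ! j = (\<Sum>i<Suc m. (-1) ^ i * esym (m - i) \<mu> * (\<mu> ! j) ^ i)"
      using j by (simp add: b_def c_def atLeast0LessThan flip: sum_set_upt_conv_sum_list_nat)
    also have "\<dots> = poly (esym_poly m (remove_nth j rs)) t"
      using alternating_sum_esym_remove_nth[OF j] by (simp add: \<mu>_def remove_nth_map poly_esym_poly)
    finally show "b ! j * (col W j \<bullet> x)\<^sup>2 = (col W j \<bullet> x)\<^sup>2 * poly (esym_poly m (remove_nth j rs)) t"
      by simp
  qed simp
  finally show ?thesis unfolding s_def .
qed

lemma p_poly_eq_poly:
  assumes "x \<in> carrier_vec n"
  shows "p_poly k r r00 x t = poly ([:r00,1:] * esym_poly k rs -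
    (\<Sum>j<n. Polynomial.smult ((col W j \<bullet> x)\<^sup>2) (esym_poly (k - 1) (remove_nth j rs)))) t"
  using r unfolding p_poly_def Let_def
  by (simp add: sigma_shift newton_T_quadratic_form[OF assms] poly_sum algebra_simps)

end

theorem theorem2p2:
  fixes n k :: nat and r :: "real mat" and rs :: "real list"
    and x :: "real vec" and r00 :: real
  assumes "1 \<le> k" and "k \<le> n"
    and "r \<in> carrier_mat n n" and "transpose_mat r = r"
    and "length rs = n" and "char_poly r = (\<Prod>e\<leftarrow>rs. [:- e, 1:])"
    and "x \<in> carrier_vec n"
  shows "\<exists>(\<alpha>::real list) (\<beta>::real list) (c::real) (d::real).
     length \<alpha> = k + 1 \<and> sorted \<alpha> \<and> c \<noteq> 0 \<and>
     (\<forall>t. p_poly k r r00 x t = c * (\<Prod>i<k + 1. t - \<alpha> ! i)) \<and>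
     length \<beta> = k \<and> sorted \<beta> \<and> d \<noteq> 0 \<and>
     (\<forall>t. sigma k (r + t \<cdot>\<^sub>m 1\<^sub>m n) = d * (\<Prod>i<k. t - \<beta> ! i)) \<and>
     (\<forall>i<k. \<alpha> ! i \<le> \<beta> ! i \<and> \<beta> ! i \<le> \<alpha> ! (i + 1)) \<and>
     (\<forall>i. 2 \<le> i \<and> i \<le> k - 1 \<longrightarrow>
        Min (uminus ` set rs) \<le> \<alpha> ! (i - 1) \<and> \<alpha> ! (i - 1) \<le> Max (uminus ` set rs))"
proof -
  obtain W where "orthonormal_mat n W" "transpose_mat W * r * W = mat_diag_list rs"
    using symmetric_mat_orthonormal_diagonalization[OF assms(3,4,6)] by blast
  then interpret orthonormal_eigenbasis n r W rs using assms by unfold_locales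
  define \<sigma> where "\<sigma> = esym_poly k rs"
  define P where "P = [:r00,1:] * \<sigma> -
    (\<Sum>j<length rs. Polynomial.smult ((col W j \<bullet> x)\<^sup>2) (esym_poly (k - 1) (remove_nth j rs)))"
  have I: "interlaces P \<sigma>" and lc_P: "lead_coeff P > 0"
    using interlaces_esym_poly_perturbation[of k rs] assms unfolding P_def \<sigma>_def by auto
  have deg: "degree \<sigma> = k" and lc_\<sigma>: "lead_coeff \<sigma> > 0"
    unfolding \<sigma>_def using assms degree_esym_poly lead_coeff_esym_poly_pos by auto
  obtain \<alpha> \<beta> where "length \<alpha> = Suc k" "sorted \<alpha>" "length \<beta> = k" "sorted \<beta>"
    and factor_P: "\<And>t. poly P t = lead_coeff P * (\<Prod>i<Suc k. t - \<alpha> ! i)"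
    and factor_\<sigma>: "\<And>t. poly \<sigma> t = lead_coeff \<sigma> * (\<Prod>i<k. t - \<beta> ! i)"
    and interlacing: "\<And>i. i < k \<Longrightarrow> \<alpha> ! i \<le> \<beta> ! i \<and> \<beta> ! i \<le> \<alpha> ! (i + 1)"
    and roots: "set \<beta> = set_mset (proots \<sigma>)"
    using interlaces_sorted_factorizations[OF I] unfolding deg by metis
  have bounds: "Min (uminus ` set rs) \<le> \<beta> ! i \<and> \<beta> ! i \<le> Max (uminus ` set rs)" if "i < k" for i
    using esym_poly_roots_bounds[of k rs] nth_mem[of i \<beta>] roots that assms \<open>length \<beta> = k\<close>
    unfolding \<sigma>_def by auto
  show ?thesis
  proof (intro exI conjI allI impI)
    show "p_poly k r r00 x t = lead_coeff P * (\<Prod>i<k + 1. t - \<alpha> ! i)" for t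
      using p_poly_eq_poly[OF assms(7)] factor_P assms(5) unfolding P_def \<sigma>_def by simp
    show "sigma k (r + t \<cdot>\<^sub>m 1\<^sub>m n) = lead_coeff \<sigma> * (\<Prod>i<k. t - \<beta> ! i)" for t
      using sigma_shift factor_\<sigma> unfolding \<sigma>_def by simp
    show "Min (uminus ` set rs) \<le> \<alpha> ! (i - 1)" "\<alpha> ! (i - 1) \<le> Max (uminus ` set rs)"
      if "2 \<le> i \<and> i \<le> k - 1" for i
      using interlaced_between_bounds[where m = k and j = "i - 1", OF interlacing bounds] that by auto
  qed (use \<open>length \<alpha> = Suc k\<close> \<open>sorted \<alpha>\<close> \<open>length \<beta> = k\<close> \<open>sorted \<beta>\<close> lc_P lc_\<sigma> interlacing in auto)
qed

end
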